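(* Let $M=\bigoplus_aB(H_a)$ and $N=\bigoplus_bB(K_b)$ be finite-dimensional algebras, $H=\bigoplus_aH_a$, and let $V\subseteq B(H)\otimes N^{op}$ be a symmetric decomposable quantum multi-relation. Then there exists a completely positive map $\Phi:M\to N$ such that $\tilde S_\Phi=V$, where $\tilde S_\Phi$ is the confusability multigraph of $\Phi$.
   Context: All Hilbert spaces are finite dimensional; inner products linear in the second variable; $\theta_{\xi,\eta}(\eta')=\langle\eta,\eta'\rangle\xi$. $M\subseteq B(H)$ and $N\subseteq B(K)$, $K=\bigoplus_bK_b$, act block-diagonally. $N^{op}$ is the opposite algebra (product $a*b=ba$), identified via $\pi_{op}(T)\overline\xi=\overline{T^*\xi}$ with $\bigoplus_bB(\overline{K_b})\subseteq B(\overline K)$. A quantum multi-relation on a pair $(M,N_0)$, $N_0\subseteq B(L)$, is a subspace $V\subseteq B(H)\otimes N_0$ which is an $(M'\otimes1)$–$(M'\otimes1)$ bimodule with $(1\otimes Z(N_0))V\subseteq V$; it is symmetric if $V^*=V$. For a single block $N_0=B(L)$, let $\sigma:B(\overline L,H)\otimes B(H,\overline L)\to B(H)\otimes B(L)$ be the linear isomorphism $\sigma(\theta_{\xi_1,\overline{\eta_1}}\otimes\theta_{\overline{\eta_2},\xi_2})=\theta_{\xi_1,\xi_2}\otimes\theta_{\eta_1,\eta_2}$; $V$ is decomposable if $V=\sigma(V_1\otimes V_2)$ for some subspaces $V_1\subseteq B(\overline L,H)$, $V_2\subseteq B(H,\overline L)$. For $N_0=\bigoplus_b B(L_b)$, $V$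 is decomposable if for each $b$ the compression $V_b=(\mathrm{id}\otimes j_b)(V)\subseteq B(H)\otimes B(L_b)$ is decomposable, where $j_b$ compresses to the $b$-th block; here this is applied with $N_0=N^{op}\cong\bigoplus_bB(\overline{K_b})$. Confusability multigraph of a CP map $\Phi:M\to N$: with $\{e^a_i\}$ an orthonormal basis of $H_a$ and $e^a_{ij}$ matrix units, let $C_\Phi=\sum_{i,j,a}e^a_{ij}\otimes\Phi(e^a_{ji})\in B(H)\otimes N^{op}\cong\mathcal{L}(\mathcal{M}_\Phi)$, where $\mathcal{M}_\Phi=H\otimes N^{op}$ is the right Hilbert $N^{op}$-module with $(\xi\otimes a)*x=\xi\otimes(a*x)$ and $\langle\xi\otimes a,\eta\otimes b\rangle=\langle\xi,\eta\rangle a^**b$. A Stinespring module is a pair $(\mathcal{E},W)$, $\mathcal{E}$ a Hilbert $N^{op}$-module and $W$ an adjointable module map $\mathcal{M}_\Phi\to\mathcal{E}$ with $W^*W=C_\Phi$; then $\tilde S_\Phi=W^*\mathcal{L}(\mathcal{E})W\subseteq B(H)\otimes N^{op}$ (independent of the choice). *)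

theory Defs
  imports Complex_Main "Jordan_Normal_Form.Matrix"
begin

text \<open>A list ns of block sizes describes
  M = (+)_a B(H_a) acting block-diagonally on H = C^d, d = sum ns;
  a list ms describes N = (+)_b B(K_b) acting on K = C^k, k = sum ms.
  Operators are complex matrices (Jordan_Normal_Form), H (x) K is C^(d*k)
  with index i*k+p, and the tensor product of operators is the Kronecker product.\<close>

type_synonym cmat = "complex mat"

definition tdim :: "nat list \<Rightarrow> nat" where "tdim ns = sum_list ns"

definition boff :: "nat list \<Rightarrow> nat \<Rightarrow> nat" where
  "boff ns a = sum_list (take a ns)"

definition blk :: "nat list \<Rightarrow> nat \<Rightarrow> nat" where
  "blk ns i = (LEAST a. i < sum_list (take (Suc a) ns))"

definition adj :: "cmat \<Rightarrow> cmat" where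
  "adj A = mat (dim_col A) (dim_row A) (\<lambda>(i,j). cnj (A $$ (j,i)))"

definition kron :: "cmat \<Rightarrow> cmat \<Rightarrow> cmat" where
  "kron A B = mat (dim_row A * dim_row B) (dim_col A * dim_col B)
     (\<lambda>(i,j). A $$ (i div dim_row B, j div dim_col B) * B $$ (i mod dim_row B, j mod dim_col B))"

definition munit :: "nat \<Rightarrow> nat \<Rightarrow> nat \<Rightarrow> nat \<Rightarrow> cmat" where
  "munit r c i j = mat r c (\<lambda>(p,q). if p = i \<and> q = j then 1 else 0)"

definition msum :: "nat \<Rightarrow> nat \<Rightarrow> ('x \<Rightarrow> cmat) \<Rightarrow> 'x set \<Rightarrow> cmat" where
  "msum r c f S = mat r c (\<lambda>ij. \<Sum>x\<in>S. f x $$ ij)"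

inductive_set mspan :: "nat \<Rightarrow> nat \<Rightarrow> cmat set \<Rightarrow> cmat set" for r c S where
  mspan_zero: "0\<^sub>m r c \<in> mspan r c S"
| mspan_base: "x \<in> S \<Longrightarrow> x \<in> mspan r c S"
| mspan_add: "x \<in> mspan r c S \<Longrightarrow> y \<in> mspan r c S \<Longrightarrow> x + y \<in> mspan r c S"
| mspan_smult: "x \<in> mspan r c S \<Longrightarrow> (a::complex) \<cdot>\<^sub>m x \<in> mspan r c S"

definition msubspace :: "nat \<Rightarrow> nat \<Rightarrow> cmat set \<Rightarrow> bool" where
  "msubspace r c V \<longleftrightarrow> V \<subseteq> carrier_mat r c \<and> 0\<^sub>m r c \<in> V \<and>
     (\<forall>x\<in>V. \<forall>y\<in>V. x + y \<in> V) \<and> (\<forall>x\<in>V. \<forall>a::complex. a \<cdot>\<^sub>m x \<in> V)"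

definition blockalg :: "nat list \<Rightarrow> cmat set" where
  "blockalg ns = {X \<in> carrier_mat (tdim ns) (tdim ns).
      \<forall>i < tdim ns. \<forall>j < tdim ns. blk ns i \<noteq> blk ns j \<longrightarrow> X $$ (i,j) = 0}"

definition commutant :: "nat \<Rightarrow> cmat set \<Rightarrow> cmat set" where
  "commutant n S = {X \<in> carrier_mat n n. \<forall>Y\<in>S. X * Y = Y * X}"

definition center :: "nat \<Rightarrow> cmat set \<Rightarrow> cmat set" where
  "center n S = S \<inter> commutant n S"

text \<open>N^op, realised via pi_op as an algebra on conj(K) = C^k: pi_op(T) = T^t
  (in the basis conj(e_p) of conj(K)); it is (+)_b B(conj(K_b)).\<close>
definition Nop :: "nat list \<Rightarrow> cmat set" where
  "Nop ms = transpose_mat ` blockalg ms"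

text \<open>algebraic tensor product B(C^c, C^r) (x) N^op inside B(C^c (x) conj K, C^r (x) conj K)\<close>
definition tensN :: "nat \<Rightarrow> nat \<Rightarrow> nat list \<Rightarrow> cmat set" where
  "tensN r c ms = mspan (r * tdim ms) (c * tdim ms)
      {kron X Y | X Y. X \<in> carrier_mat r c \<and> Y \<in> Nop ms}"

definition qmr :: "nat list \<Rightarrow> nat list \<Rightarrow> cmat set \<Rightarrow> bool" where
  "qmr ns ms V \<longleftrightarrow>
     (let d = tdim ns; k = tdim ms in
       msubspace (d*k) (d*k) V \<and> V \<subseteq> tensN d d ms \<and>
       (\<forall>A \<in> commutant d (blockalg ns). \<forall>v\<in>V.
           kron A (1\<^sub>m k) * v \<in> V \<and> v * kron A (1\<^sub>m k) \<in> V) \<and>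
       (\<forall>Z \<in> center k (Nop ms). \<forall>v\<in>V. kron (1\<^sub>m d) Z * v \<in> V))"

definition symmetric_qmr :: "cmat set \<Rightarrow> bool" where
  "symmetric_qmr V \<longleftrightarrow> adj ` V = V"

text \<open>compression (id (x) j_b): B(H) (x) N^op -> B(H) (x) B(conj K_b)\<close>
definition compress :: "nat list \<Rightarrow> nat list \<Rightarrow> nat \<Rightarrow> cmat \<Rightarrow> cmat" where
  "compress ns ms b v =
     (let d = tdim ns; k = tdim ms; l = ms ! b; ob = boff ms b in
       mat (d*l) (d*l) (\<lambda>(r,s). v $$ ((r div l) * k + ob + r mod l, (s div l) * k + ob + s mod l)))"

text \<open>sigma : B(conj L, H) (x) B(H, conj L) -> B(H) (x) B(L) on elementary tensors,
  in coordinates (H = C^d, L = C^l):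
  sigma(e_ip (x) e_qj) = e_ij (x) e_pq, i.e. sigma(x (x) y) has (i,j,p,q)-entry x_ip y_qj.\<close>
definition sigma :: "nat \<Rightarrow> nat \<Rightarrow> cmat \<Rightarrow> cmat \<Rightarrow> cmat" where
  "sigma d l x y = mat (d*l) (d*l)
     (\<lambda>(r,s). x $$ (r div l, r mod l) * y $$ (s mod l, s div l))"

definition decomposable_single :: "nat \<Rightarrow> nat \<Rightarrow> cmat set \<Rightarrow> bool" where
  "decomposable_single d l W \<longleftrightarrow>
     (\<exists>V1 V2. msubspace d l V1 \<and> msubspace l d V2 \<and>
        W = mspan (d*l) (d*l) {sigma d l x y | x y. x \<in> V1 \<and> y \<in> V2})"

definition decomposable :: "nat list \<Rightarrow> nat list \<Rightarrow> cmat set \<Rightarrow> bool" where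
  "decomposable ns ms V \<longleftrightarrow>
     (\<forall>b < length ms. decomposable_single (tdim ns) (ms ! b) (compress ns ms b ` V))"

definition positive :: "nat \<Rightarrow> cmat \<Rightarrow> bool" where
  "positive n X \<longleftrightarrow> X \<in> carrier_mat n n \<and>
     (\<forall>v \<in> carrier_vec n. let z = conjugate v \<bullet> (X *\<^sub>v v) in Im z = 0 \<and> 0 \<le> Re z)"

definition subblock :: "nat \<Rightarrow> cmat \<Rightarrow> nat \<Rightarrow> nat \<Rightarrow> cmat" where
  "subblock b Z s t = mat b b (\<lambda>(i,j). Z $$ (s*b + i, t*b + j))"

text \<open>amplification Phi (x) id_{M_n}\<close>
definition amplify :: "nat \<Rightarrow> nat \<Rightarrow> nat \<Rightarrow> (cmat \<Rightarrow> cmat) \<Rightarrow> cmat \<Rightarrow> cmat" where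
  "amplify d k n Phi Z = mat (n*k) (n*k)
     (\<lambda>(r,c). Phi (subblock d Z (r div k) (c div k)) $$ (r mod k, c mod k))"

definition cp_map :: "nat list \<Rightarrow> nat list \<Rightarrow> (cmat \<Rightarrow> cmat) \<Rightarrow> bool" where
  "cp_map ns ms Phi \<longleftrightarrow>
     (let d = tdim ns; k = tdim ms in
       (\<forall>X \<in> blockalg ns. Phi X \<in> blockalg ms) \<and>
       (\<forall>X \<in> blockalg ns. \<forall>Y \<in> blockalg ns. Phi (X + Y) = Phi X + Phi Y) \<and>
       (\<forall>X \<in> blockalg ns. \<forall>a::complex. Phi (a \<cdot>\<^sub>m X) = a \<cdot>\<^sub>m Phi X) \<and>
       (\<forall>n. \<forall>Z. Z \<in> carrier_mat (n*d) (n*d) \<and>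
             (\<forall>s<n. \<forall>t<n. subblock d Z s t \<in> blockalg ns) \<and> positive (n*d) Z
             \<longrightarrow> positive (n*k) (amplify d k n Phi Z)))"

text \<open>C_Phi = sum_{a,i,j} e^a_ij (x) Phi(e^a_ji), the second factor read in N^op (via pi_op)\<close>
definition CPhi :: "nat list \<Rightarrow> nat list \<Rightarrow> (cmat \<Rightarrow> cmat) \<Rightarrow> cmat" where
  "CPhi ns ms Phi =
     (let d = tdim ns; k = tdim ms in
       msum (d*k) (d*k)
         (\<lambda>(i,j). kron (munit d d i j) (transpose_mat (Phi (munit d d j i))))
         {(i,j). i < d \<and> j < d \<and> blk ns i = blk ns j})"

text \<open>Stinespring module (E, W) with E = C^m (x) N^op (a free Hilbert N^op-module);
  L(E) = B(C^m) (x) N^op and adjointable module maps M_Phi -> E are B(C^d,C^m) (x) N^op.\<close>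
definition stinespring :: "nat list \<Rightarrow> nat list \<Rightarrow> (cmat \<Rightarrow> cmat) \<Rightarrow> nat \<Rightarrow> cmat \<Rightarrow> bool" where
  "stinespring ns ms Phi m W \<longleftrightarrow>
     W \<in> tensN m (tdim ns) ms \<and> adj W * W = CPhi ns ms Phi"

definition tildeS :: "nat list \<Rightarrow> nat list \<Rightarrow> (cmat \<Rightarrow> cmat) \<Rightarrow> cmat set" where
  "tildeS ns ms Phi =
     (SOME S. \<exists>m W. stinespring ns ms Phi m W \<and>
        S = {adj W * Y * W | Y. Y \<in> tensN m m ms})"

end

theory Submission
  imports Defs "Jordan_Normal_Form.Determinant"
begin

text \<open>
  The subspace V turns out to be a corner P (B(H) \<otimes> N^op) P for an orthogonal projection
  P in B(H) \<otimes> N^op.  On the b-th block of N^op the compression of V is the span of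
  \<sigma>(V1 \<otimes> V2); being closed under adjoints, it equals P_b B(H \<otimes> conj K_b) P_b, where
  P_b projects onto the vectors vec x with x \<in> V1 and x^* \<in> V2.  The central projections
  of N^op glue the P_b together into P.  Since V is an M'-bimodule and the projections E_a
  onto the blocks of H lie in M', P commutes with E_a \<otimes> 1; so P is block diagonal over M
  and P = C_\<Phi> for the linear map \<Phi> : M \<rightarrow> N having P as its Choi matrix.  This \<Phi> is
  completely positive because P = P P^*.  Finally, for every Stinespring module (E, W),
  W^* W = P forces W P = W, so W^* L(E) W = P (B(H) \<otimes> N^op) P = V.
\<close>

section \<open>Spans and finite sums of matrices\<close>

lemma mspan_carrier: assumes "S \<subseteq> carrier_mat r c" "x \<in> mspan r c S" shows "x \<in> carrier_mat r c"
  using assms(2,1) by (induction rule: mspan.induct) auto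

lemma mspan_least: assumes "msubspace r c W" "S \<subseteq> W" shows "mspan r c S \<subseteq> W"
proof
  fix x assume "x \<in> mspan r c S" then show "x \<in> W"
    using assms by (induction rule: mspan.induct) (auto simp: msubspace_def)
qed

lemma msubspace_mspan: "S \<subseteq> carrier_mat r c \<Longrightarrow> msubspace r c (mspan r c S)"
  unfolding msubspace_def using mspan_carrier by (auto intro: mspan.intros)

lemma mspan_mono: "S \<subseteq> T \<Longrightarrow> T \<subseteq> carrier_mat r c \<Longrightarrow> mspan r c S \<subseteq> mspan r c T"
  by (rule mspan_least[OF msubspace_mspan]) (auto intro: mspan.intros)

lemma msum_empty: "msum r c g {} = 0\<^sub>m r c"
  unfolding msum_def by (rule eq_matI) auto

lemma msum_insert: assumes "finite J" "j \<notin> J" "g j \<in> carrier_mat r c"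
  shows "msum r c g (insert j J) = g j + msum r c g J"
  unfolding msum_def using assms by (intro eq_matI) auto

lemma msum_in_msubspace: assumes "msubspace r c W" "finite J" "\<And>j. j \<in> J \<Longrightarrow> g j \<in> W"
  shows "msum r c g J \<in> W"
  using assms(2,3)
proof (induction J rule: finite_induct)
  case empty then show ?case using assms(1) by (simp add: msum_empty msubspace_def)
next
  case (insert j J)
  have "g j \<in> carrier_mat r c" using insert assms(1) by (auto simp: msubspace_def)
  then show ?case using insert assms(1) by (simp add: msum_insert msubspace_def)
qed

lemma index_msum: "i < r \<Longrightarrow> j < c \<Longrightarrow> msum r c g J $$ (i,j) = (\<Sum>x\<in>J. g x $$ (i,j))"
  unfolding msum_def by simp

lemma dim_msum[simp]: "dim_row (msum r c g J) = r" "dim_col (msum r c g J) = c"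
  unfolding msum_def by simp_all

lemma msum_carrier[simp]: "msum r c g J \<in> carrier_mat r c"
  unfolding msum_def by simp

section \<open>Block indices\<close>

lemma index_mod_less: "(r::nat) < d * l \<Longrightarrow> r mod l < l"
  by (cases "l = 0") auto

lemma index_comb_less: "(i::nat) < d \<Longrightarrow> p < l \<Longrightarrow> i * l + p < d * l"
proof -
  assume i: "i < d" and p: "p < l"
  have "i * l + p < (i + 1) * l" using p by simp
  also have "\<dots> \<le> d * l" using i by (intro mult_right_mono) auto
  finally show ?thesis .
qed

lemma index_comb_divmod: "(p::nat) < l \<Longrightarrow> (i * l + p) div l = i \<and> (i * l + p) mod l = p"
  by auto

lemma sum_list_take_mono: "i \<le> j \<Longrightarrow> sum_list (take i (xs::nat list)) \<le> sum_list (take j xs)"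
proof -
  assume "i \<le> j"
  then have "take j xs = take i xs @ take (j - i) (drop i xs)"
    by (metis le_add_diff_inverse take_add)
  then show ?thesis by simp
qed

lemma sum_list_take_Suc: "a < length xs \<Longrightarrow> sum_list (take (Suc a) (xs::nat list)) = sum_list (take a xs) + xs ! a"
  by (simp add: take_Suc_conv_app_nth)

lemma blk_boff_add: assumes "b < length ms" "p < ms ! b"
  shows "blk ms (boff ms b + p) = b"
  unfolding blk_def
proof (rule Least_equality)
  show "boff ms b + p < sum_list (take (Suc b) ms)"
    using assms by (simp add: sum_list_take_Suc boff_def)
next
  fix a assume a: "boff ms b + p < sum_list (take (Suc a) ms)"
  show "b \<le> a"
  proof (rule ccontr)
    assume "\<not> b \<le> a"
    then have "sum_list (take (Suc a) ms) \<le> sum_list (take b ms)" by (intro sum_list_take_mono) auto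
    then show False using a by (simp add: boff_def)
  qed
qed
lemma blk_bounds: assumes "t < tdim ms"
  shows "blk ms t < length ms" "boff ms (blk ms t) \<le> t" "t < boff ms (blk ms t) + ms ! (blk ms t)"
proof -
  let ?P = "\<lambda>a. t < sum_list (take (Suc a) ms)"
  have ex: "?P (length ms)" using assms by (simp add: tdim_def)
  have P0: "?P (blk ms t)" unfolding blk_def by (rule LeastI[of ?P, OF ex])
  have min: "\<And>a. a < blk ms t \<Longrightarrow> \<not> ?P a" unfolding blk_def by (rule not_less_Least)
  show lt: "blk ms t < length ms"
  proof (rule ccontr)
    assume "\<not> blk ms t < length ms"
    then have "length ms \<le> blk ms t" by simp
    moreover have "length ms \<noteq> 0" using assms by (auto simp: tdim_def)
    ultimately have "length ms - 1 < blk ms t" by (cases ms) auto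
    from min[OF this] have "\<not> t < sum_list (take (Suc (length ms - 1)) ms)" .
    moreover have "Suc (length ms - 1) = length ms" using \<open>length ms \<noteq> 0\<close> by simp
    ultimately show False using assms by (simp add: tdim_def)
  qed
  show "boff ms (blk ms t) \<le> t"
  proof (cases "blk ms t")
    case 0 then show ?thesis by (simp add: boff_def)
  next
    case (Suc a)
    then have "\<not> ?P a" using min by simp
    then show ?thesis using Suc by (simp add: boff_def)
  qed
  show "t < boff ms (blk ms t) + ms ! (blk ms t)"
    using P0 lt by (simp add: sum_list_take_Suc boff_def)
qed

lemma boff_add_le_tdim: assumes "b < length ms" shows "boff ms b + ms ! b \<le> tdim ms"
proof -
  have "boff ms b + ms ! b = sum_list (take (Suc b) ms)" using assms by (simp add: sum_list_take_Suc boff_def)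
  also have "\<dots> \<le> sum_list (take (length ms) ms)" using assms by (intro sum_list_take_mono) auto
  finally show ?thesis by (simp add: tdim_def)
qed

definition block_index :: "nat list \<Rightarrow> nat \<Rightarrow> nat \<Rightarrow> nat" where
  "block_index ms b r = (r div (ms ! b)) * tdim ms + (boff ms b + r mod (ms ! b))"

definition local_index :: "nat list \<Rightarrow> nat \<Rightarrow> nat" where
  "local_index ms R = (R div tdim ms) * (ms ! blk ms (R mod tdim ms)) + (R mod tdim ms - boff ms (blk ms (R mod tdim ms)))"

lemma block_index_props: assumes b: "b < length ms" and r: "r < d * (ms ! b)"
  shows "block_index ms b r < d * tdim ms" "block_index ms b r mod tdim ms = boff ms b + r mod (ms ! b)"
    "block_index ms b r div tdim ms = r div (ms ! b)" "blk ms (block_index ms b r mod tdim ms) = b"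
    "local_index ms (block_index ms b r) = r"
proof -
  let ?l = "ms ! b" and ?k = "tdim ms" and ?o = "boff ms b"
  have rl: "r mod ?l < ?l" using index_mod_less[OF r] .
  have rd: "r div ?l < d" using less_mult_imp_div_less[OF r] .
  have ok: "?o + ?l \<le> ?k" using boff_add_le_tdim[OF b] .
  have t: "?o + r mod ?l < ?k" using rl ok by simp
  show "block_index ms b r < d * ?k" unfolding block_index_def using index_comb_less[OF rd t] .
  show m: "block_index ms b r mod ?k = ?o + r mod ?l" unfolding block_index_def using t by simp
  show dv: "block_index ms b r div ?k = r div ?l" unfolding block_index_def using t by simp
  show bl: "blk ms (block_index ms b r mod ?k) = b" unfolding m using blk_boff_add[OF b rl] .
  show "local_index ms (block_index ms b r) = r" unfolding local_index_def m dv blk_boff_add[OF b rl] by (simp add: div_mult_mod_eq)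
qed

lemma local_index_props: assumes R: "R < d * tdim ms"
  shows "local_index ms R < d * (ms ! blk ms (R mod tdim ms))" "block_index ms (blk ms (R mod tdim ms)) (local_index ms R) = R"
proof -
  let ?k = "tdim ms" and ?t = "R mod tdim ms"
  let ?b = "blk ms ?t"
  let ?l = "ms ! ?b" and ?o = "boff ms ?b"
  have k: "0 < ?k" using R by (cases ?k) auto
  have tk: "?t < ?k" using k by simp
  have iR: "R div ?k < d" using less_mult_imp_div_less[OF R] .
  note br = blk_bounds[OF tk]
  have tl: "?t - ?o < ?l" using br by linarith
  show "local_index ms R < d * ?l" unfolding local_index_def using index_comb_less[OF iR tl] .
  have "block_index ms ?b (local_index ms R) = (R div ?k) * ?k + (?o + (?t - ?o))"
    unfolding block_index_def local_index_def using tl by simp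
  also have "\<dots> = R" using br by simp
  finally show "block_index ms ?b (local_index ms R) = R" .
qed

lemma block_index_image: assumes b: "b < length ms"
  shows "block_index ms b ` {..<d * ms ! b} = {T. T < d * tdim ms \<and> blk ms (T mod tdim ms) = b}"
proof (intro equalityI subsetI)
  fix T assume "T \<in> block_index ms b ` {..<d * ms ! b}"
  then obtain r where r: "r < d * ms ! b" and T: "T = block_index ms b r" by auto
  show "T \<in> {T. T < d * tdim ms \<and> blk ms (T mod tdim ms) = b}" using block_index_props[OF b r] T by simp
next
  fix T assume "T \<in> {T. T < d * tdim ms \<and> blk ms (T mod tdim ms) = b}"
  then have T: "T < d * tdim ms" and bT: "blk ms (T mod tdim ms) = b" by auto
  show "T \<in> block_index ms b ` {..<d * ms ! b}"
    using local_index_props[OF T] bT by (intro image_eqI[of _ _ "local_index ms T"]) auto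
qed

lemma block_index_inj: assumes b: "b < length ms" shows "inj_on (block_index ms b) {..<d * ms ! b}"
proof
  fix r s assume "r \<in> {..<d * ms ! b}" "s \<in> {..<d * ms ! b}" and e: "block_index ms b r = block_index ms b s"
  then have r: "r < d * ms ! b" and s: "s < d * ms ! b" by auto
  have "local_index ms (block_index ms b r) = local_index ms (block_index ms b s)" using e by simp
  then show "r = s" using block_index_props(5)[OF b r] block_index_props(5)[OF b s] by simp
qed

lemma sum_restrict_block: assumes b: "b < length ms"
  and z: "\<And>T. T < d * tdim ms \<Longrightarrow> blk ms (T mod tdim ms) \<noteq> b \<Longrightarrow> f T = 0"
  shows "(\<Sum>T<d * tdim ms. f T) = (\<Sum>u<d * ms ! b. f (block_index ms b u))"
proof -
  let ?A = "{T. T < d * tdim ms \<and> blk ms (T mod tdim ms) = b}"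
  have "(\<Sum>T<d * tdim ms. f T) = (\<Sum>T\<in>?A. f T)"
    by (rule sum.mono_neutral_right) (use z in auto)
  also have "\<dots> = (\<Sum>T\<in>block_index ms b ` {..<d * ms ! b}. f T)" unfolding block_index_image[OF b] ..
  also have "\<dots> = (\<Sum>u<d * ms ! b. f (block_index ms b u))"
    by (subst sum.reindex[OF block_index_inj[OF b]]) simp
  finally show ?thesis .
qed

section \<open>Matrix units, Kronecker products and adjoints\<close>

lemma dim_munit[simp]: "dim_row (munit r c i j) = r" "dim_col (munit r c i j) = c"
  by (simp_all add: munit_def)

lemma dim_kron[simp]: "dim_row (kron A B) = dim_row A * dim_row B" "dim_col (kron A B) = dim_col A * dim_col B"
  by (simp_all add: kron_def)

lemma munit_carrier[simp]: "munit r c i j \<in> carrier_mat r c"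
  by (simp add: munit_def)

lemma munit_index[simp]: "p < r \<Longrightarrow> q < c \<Longrightarrow> munit r c i j $$ (p,q) = (if p = i \<and> q = j then 1 else 0)"
  by (simp add: munit_def)

lemma kron_carrier[simp]: "kron A B \<in> carrier_mat (dim_row A * dim_row B) (dim_col A * dim_col B)"
  by (simp add: kron_def)

lemma kron_index: "i < dim_row A * dim_row B \<Longrightarrow> j < dim_col A * dim_col B \<Longrightarrow>
  kron A B $$ (i,j) = A $$ (i div dim_row B, j div dim_col B) * B $$ (i mod dim_row B, j mod dim_col B)"
  by (simp add: kron_def)

lemma adj_carrier[simp]: "A \<in> carrier_mat r c \<Longrightarrow> adj A \<in> carrier_mat c r"
  by (auto simp: adj_def)

lemma dim_adj[simp]: "dim_row (adj A) = dim_col A" "dim_col (adj A) = dim_row A"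
  by (auto simp: adj_def)

lemma adj_index[simp]: "i < dim_col A \<Longrightarrow> j < dim_row A \<Longrightarrow> adj A $$ (i,j) = cnj (A $$ (j,i))"
  by (auto simp: adj_def)

lemma adj_adj[simp]: "adj (adj A) = A"
  by (rule eq_matI) auto

lemma adj_mult: assumes "A \<in> carrier_mat r n" "B \<in> carrier_mat n c"
  shows "adj (A * B) = adj B * adj A"
proof (rule eq_matI)
  fix i j assume "i < dim_row (adj B * adj A)" "j < dim_col (adj B * adj A)"
  then have i: "i < c" and j: "j < r" using assms by auto
  have "adj (A * B) $$ (i,j) = cnj (\<Sum>t<n. A $$ (j,t) * B $$ (t,i))"
    using assms i j by (simp add: scalar_prod_def atLeast0LessThan)
  also have "\<dots> = (\<Sum>t<n. cnj (B $$ (t,i)) * cnj (A $$ (j,t)))"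
    by (simp add: mult.commute)
  also have "\<dots> = (adj B * adj A) $$ (i,j)"
    using assms i j by (simp add: scalar_prod_def atLeast0LessThan)
  finally show "adj (A * B) $$ (i,j) = (adj B * adj A) $$ (i,j)" .
qed (use assms in auto)

lemma adj_add: assumes "A \<in> carrier_mat r c" "B \<in> carrier_mat r c" shows "adj (A + B) = adj A + adj B"
  by (rule eq_matI) (use assms in auto)

lemma adj_smult: "adj (a \<cdot>\<^sub>m A) = cnj a \<cdot>\<^sub>m adj A"
  by (rule eq_matI) auto

lemma adj_minus: assumes "A \<in> carrier_mat r c" "B \<in> carrier_mat r c" shows "adj (A - B) = adj A - adj B"
  by (rule eq_matI) (use assms in auto)

lemma adj_one[simp]: "adj (1\<^sub>m n) = 1\<^sub>m n"
  by (rule eq_matI) auto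

lemma adj_zero[simp]: "adj (0\<^sub>m r c) = 0\<^sub>m c r"
  by (rule eq_matI) auto

lemma sum_cnj_mult_self_eq_zero: fixes f :: "nat \<Rightarrow> complex"
  assumes "(\<Sum>t<n. cnj (f t) * f t) = 0" "t < n" shows "f t = 0"
proof -
  have "Re (\<Sum>t<n. cnj (f t) * f t) = (\<Sum>t<n. (Re (f t))^2 + (Im (f t))^2)"
    by (simp add: power2_eq_square)
  then have "(\<Sum>t<n. (Re (f t))^2 + (Im (f t))^2) = 0" using assms(1) by simp
  then have "(Re (f t))^2 + (Im (f t))^2 = 0" using assms(2)
    by (subst (asm) sum_nonneg_eq_0_iff) auto
  then have "Re (f t) = 0" "Im (f t) = 0" by (simp_all add: sum_power2_eq_zero_iff)
  then show ?thesis by (simp add: complex_eq_iff)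
qed

lemma adj_mult_self_eq_zero: assumes A: "A \<in> carrier_mat r c" and z: "adj A * A = 0\<^sub>m c c"
  shows "A = 0\<^sub>m r c"
proof (rule eq_matI)
  fix i j assume "i < dim_row (0\<^sub>m r c)" "j < dim_col (0\<^sub>m r c)"
  then have i: "i < r" and j: "j < c" by auto
  have "(adj A * A) $$ (j,j) = (\<Sum>t<r. cnj (A $$ (t,j)) * A $$ (t,j))"
    using A j by (simp add: scalar_prod_def atLeast0LessThan)
  then have "(\<Sum>t<r. cnj (A $$ (t,j)) * A $$ (t,j)) = 0" using z j by simp
  from sum_cnj_mult_self_eq_zero[OF this i] show "A $$ (i,j) = 0\<^sub>m r c $$ (i,j)" using i j by simp
qed (use A in auto)

lemma minus_eq_zero_mat:
  fixes A B :: "'a :: ab_group_add mat"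
  assumes "A \<in> carrier_mat r c" "B \<in> carrier_mat r c" "A - B = 0\<^sub>m r c"
  shows "A = B"
proof (rule eq_matI)
  fix i j assume ij: "i < dim_row B" "j < dim_col B"
  have "(A - B) $$ (i,j) = 0" using assms ij by simp
  then show "A $$ (i,j) = B $$ (i,j)" using assms(1,2) ij by simp
qed (use assms in auto)

section \<open>The spaces B(C^c, C^r) \<otimes> N^op\<close>

definition right_blockdiag :: "nat list \<Rightarrow> nat \<Rightarrow> nat \<Rightarrow> cmat \<Rightarrow> bool" where
  "right_blockdiag ms r c X \<longleftrightarrow> X \<in> carrier_mat (r * tdim ms) (c * tdim ms) \<and>
     (\<forall>i < r * tdim ms. \<forall>j < c * tdim ms. blk ms (i mod tdim ms) \<noteq> blk ms (j mod tdim ms) \<longrightarrow> X $$ (i,j) = 0)"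

lemma Nop_offblock_zero: assumes "Y \<in> Nop ms" "p < tdim ms" "q < tdim ms" "blk ms p \<noteq> blk ms q"
  shows "Y $$ (p,q) = 0"
proof -
  obtain Y0 where Y0: "Y0 \<in> blockalg ms" "Y = transpose_mat Y0" using assms(1) by (auto simp: Nop_def)
  then show ?thesis using assms by (auto simp: blockalg_def)
qed

lemma Nop_carrier: "Y \<in> Nop ms \<Longrightarrow> Y \<in> carrier_mat (tdim ms) (tdim ms)"
  by (auto simp: Nop_def blockalg_def)

lemma munit_in_Nop: assumes "p < tdim ms" "q < tdim ms" "blk ms p = blk ms q"
  shows "munit (tdim ms) (tdim ms) p q \<in> Nop ms"
proof -
  have "munit (tdim ms) (tdim ms) q p \<in> blockalg ms"
    using assms unfolding blockalg_def by auto
  moreover have "munit (tdim ms) (tdim ms) p q = transpose_mat (munit (tdim ms) (tdim ms) q p)"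
    by (rule eq_matI) auto
  ultimately show ?thesis unfolding Nop_def by blast
qed

lemma tensN_right_blockdiag: assumes "X \<in> tensN r c ms" shows "right_blockdiag ms r c X"
  using assms unfolding tensN_def
proof (induction rule: mspan.induct)
  case mspan_zero then show ?case by (simp add: right_blockdiag_def)
next
  case (mspan_base x)
  then obtain X Y where x: "x = kron X Y" and X: "X \<in> carrier_mat r c" and Y: "Y \<in> Nop ms" by auto
  have Yc: "Y \<in> carrier_mat (tdim ms) (tdim ms)" using Nop_carrier[OF Y] .
  show ?case unfolding right_blockdiag_def
  proof (intro conjI allI impI)
    show "x \<in> carrier_mat (r * tdim ms) (c * tdim ms)" using x X Yc kron_carrier[of X Y] by auto
    fix i j assume i: "i < r * tdim ms" and j: "j < c * tdim ms" and b: "blk ms (i mod tdim ms) \<noteq> blk ms (j mod tdim ms)"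
    have k: "0 < tdim ms" using i by (cases "tdim ms") auto
    have "Y $$ (i mod tdim ms, j mod tdim ms) = 0" using Nop_offblock_zero[OF Y _ _ b] k by auto
    then show "x $$ (i,j) = 0" using x X Yc i j by (simp add: kron_index)
  qed
next
  case (mspan_add x y)
  then show ?case by (auto simp: right_blockdiag_def)
next
  case (mspan_smult x a)
  then show ?case by (auto simp: right_blockdiag_def)
qed

lemma mat_eq_msum_kron_munit:
  assumes Xc: "X \<in> carrier_mat (r * k) (c * k)"
  shows "X = msum (r * k) (c * k)
      (\<lambda>(i,j). X $$ (i,j) \<cdot>\<^sub>m kron (munit r c (i div k) (j div k)) (munit k k (i mod k) (j mod k)))
      ({..<r * k} \<times> {..<c * k})"
    (is "X = msum _ _ ?g ?J")
proof (rule eq_matI)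
  fix a b assume "a < dim_row (msum (r * k) (c * k) ?g ?J)" "b < dim_col (msum (r * k) (c * k) ?g ?J)"
  then have a: "a < r * k" and b: "b < c * k" by auto
  have k: "0 < k" using a by (cases k) auto
  have ad: "a div k < r" "b div k < c" using a b by (auto simp: less_mult_imp_div_less)
  have "msum (r * k) (c * k) ?g ?J $$ (a,b) = (\<Sum>ij\<in>?J. ?g ij $$ (a,b))" using a b by (simp add: index_msum)
  also have "\<dots> = (\<Sum>ij\<in>?J. if ij = (a,b) then X $$ (a,b) else 0)"
  proof (rule sum.cong[OF refl])
    fix ij assume "ij \<in> ?J"
    have "?g ij $$ (a,b) = X $$ ij * ((if a div k = fst ij div k \<and> b div k = snd ij div k then 1 else 0) *
           (if a mod k = fst ij mod k \<and> b mod k = snd ij mod k then 1 else 0))"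
      using a b k ad by (simp add: kron_index case_prod_unfold)
    also have "\<dots> = (if ij = (a,b) then X $$ (a,b) else 0)"
      by (cases ij) (auto, metis div_mult_mod_eq, metis div_mult_mod_eq)
    finally show "?g ij $$ (a,b) = (if ij = (a,b) then X $$ (a,b) else 0)" .
  qed
  also have "\<dots> = X $$ (a,b)" using a b by (simp add: sum.delta')
  finally show "X $$ (a,b) = msum (r * k) (c * k) ?g ?J $$ (a,b)" by simp
qed (use Xc in auto)

lemma right_blockdiag_tensN: assumes X: "right_blockdiag ms r c X" shows "X \<in> tensN r c ms"
proof -
  let ?k = "tdim ms"
  have Xc: "X \<in> carrier_mat (r * ?k) (c * ?k)" using X by (simp add: right_blockdiag_def)
  have tens: "msubspace (r * ?k) (c * ?k) (tensN r c ms)" unfolding tensN_def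
  proof (rule msubspace_mspan, safe)
    fix X Y :: cmat assume "X \<in> carrier_mat r c" "Y \<in> Nop ms"
    then show "kron X Y \<in> carrier_mat (r * ?k) (c * ?k)" using Nop_carrier[of Y ms]
      by (metis carrier_matD kron_carrier)
  qed
  have "X $$ (i,j) \<cdot>\<^sub>m kron (munit r c (i div ?k) (j div ?k)) (munit ?k ?k (i mod ?k) (j mod ?k)) \<in> tensN r c ms"
    if i: "i < r * ?k" and j: "j < c * ?k" for i j
  proof (cases "blk ms (i mod ?k) = blk ms (j mod ?k)")
    case True
    have "0 < ?k" using i by (cases ?k) auto
    then have "munit ?k ?k (i mod ?k) (j mod ?k) \<in> Nop ms" using True by (intro munit_in_Nop) auto
    then have "kron (munit r c (i div ?k) (j div ?k)) (munit ?k ?k (i mod ?k) (j mod ?k)) \<in> tensN r c ms"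
      unfolding tensN_def by (intro mspan_base) (blast intro: munit_carrier)
    then show ?thesis unfolding tensN_def by (rule mspan_smult)
  next
    case False
    then have "X $$ (i,j) = 0" using X i j by (simp add: right_blockdiag_def)
    then have "X $$ (i,j) \<cdot>\<^sub>m kron (munit r c (i div ?k) (j div ?k)) (munit ?k ?k (i mod ?k) (j mod ?k))
        = 0\<^sub>m (r * ?k) (c * ?k)"
      by (intro eq_matI) auto
    then show ?thesis using tens by (simp add: msubspace_def)
  qed
  then have "msum (r * ?k) (c * ?k)
      (\<lambda>(i,j). X $$ (i,j) \<cdot>\<^sub>m kron (munit r c (i div ?k) (j div ?k)) (munit ?k ?k (i mod ?k) (j mod ?k)))
      ({..<r * ?k} \<times> {..<c * ?k}) \<in> tensN r c ms"
    by (intro msum_in_msubspace[OF tens]) auto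
  then show ?thesis using mat_eq_msum_kron_munit[OF Xc] by simp
qed

lemma tensN_eq_right_blockdiag: "tensN r c ms = {X. right_blockdiag ms r c X}"
  using tensN_right_blockdiag right_blockdiag_tensN by auto

lemma right_blockdiag_carrier: "right_blockdiag ms r c X \<Longrightarrow> X \<in> carrier_mat (r * tdim ms) (c * tdim ms)"
  by (simp add: right_blockdiag_def)

lemma right_blockdiag_mult: assumes X: "right_blockdiag ms r c X" and Y: "right_blockdiag ms c s Y" shows "right_blockdiag ms r s (X * Y)"
  unfolding right_blockdiag_def
proof (intro conjI allI impI)
  let ?k = "tdim ms"
  have Xc: "X \<in> carrier_mat (r * ?k) (c * ?k)" and Yc: "Y \<in> carrier_mat (c * ?k) (s * ?k)"
    using X Y by (auto simp: right_blockdiag_def)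
  show "X * Y \<in> carrier_mat (r * ?k) (s * ?k)" using Xc Yc by auto
  fix i j assume i: "i < r * ?k" and j: "j < s * ?k" and b: "blk ms (i mod ?k) \<noteq> blk ms (j mod ?k)"
  have "(X * Y) $$ (i,j) = (\<Sum>t<c * ?k. X $$ (i,t) * Y $$ (t,j))"
    using Xc Yc i j by (simp add: scalar_prod_def atLeast0LessThan)
  also have "\<dots> = 0"
  proof (rule sum.neutral, safe)
    fix t assume t: "t < c * ?k"
    show "X $$ (i,t) * Y $$ (t,j) = 0"
    proof (cases "blk ms (i mod ?k) = blk ms (t mod ?k)")
      case True
      then have "blk ms (t mod ?k) \<noteq> blk ms (j mod ?k)" using b by simp
      then show ?thesis using Y t j by (simp add: right_blockdiag_def)
    next
      case False then show ?thesis using X t i by (simp add: right_blockdiag_def)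
    qed
  qed
  finally show "(X * Y) $$ (i,j) = 0" .
qed

lemma right_blockdiag_adj: assumes "right_blockdiag ms r c X" shows "right_blockdiag ms c r (adj X)"
  using assms unfolding right_blockdiag_def by (auto simp: carrier_matD)

section \<open>Corners and the confusability multigraph\<close>

lemma mult_proj_eq_self: assumes Wc: "W \<in> carrier_mat a n" and Pc: "P \<in> carrier_mat n n"
  and Ph: "adj P = P" and Pi: "P * P = P" and WW: "adj W * W = P"
  shows "W * P = W"
proof -
  let ?I = "1\<^sub>m n"
  define D where "D = W * (?I - P)"
  have IPc: "?I - P \<in> carrier_mat n n" using Pc by auto
  have Dc: "D \<in> carrier_mat a n" using Wc IPc by (simp add: D_def)
  have aIP: "adj (?I - P) = ?I - P" using adj_minus[OF one_carrier_mat Pc] Ph adj_one by (simp only:)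
  have adjD: "adj D = (?I - P) * adj W"
    unfolding D_def using adj_mult[OF Wc IPc] aIP by (simp only:)
  have IPP: "(?I - P) * P = 0\<^sub>m n n"
  proof -
    have "(?I - P) * P = ?I * P - P * P" by (rule minus_mult_distrib_mat[OF one_carrier_mat Pc Pc])
    also have "\<dots> = P - P" using Pi left_mult_one_mat[OF Pc] by (simp only:)
    also have "\<dots> = 0\<^sub>m n n" using Pc by (rule minus_r_inv_mat)
    finally show ?thesis .
  qed
  have aW: "adj W \<in> carrier_mat n a" using Wc by simp
  have "adj D * D = (?I - P) * adj W * D" unfolding adjD ..
  also have "\<dots> = (?I - P) * adj W * (W * (?I - P))" unfolding D_def ..
  also have "\<dots> = (?I - P) * (adj W * (W * (?I - P)))"
    using assoc_mult_mat[OF IPc aW mult_carrier_mat[OF Wc IPc]] .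
  also have "adj W * (W * (?I - P)) = (adj W * W) * (?I - P)"
    using assoc_mult_mat[OF aW Wc IPc] by (simp only:)
  also have "(?I - P) * ((adj W * W) * (?I - P)) = (?I - P) * (adj W * W) * (?I - P)"
    using assoc_mult_mat[OF IPc mult_carrier_mat[OF aW Wc] IPc] by (simp only:)
  also have "\<dots> = 0\<^sub>m n n * (?I - P)" unfolding WW IPP ..
  also have "\<dots> = 0\<^sub>m n n" by (rule left_mult_zero_mat[OF IPc])
  finally have "D = 0\<^sub>m a n" by (rule adj_mult_self_eq_zero[OF Dc])
  then have "W * ?I - W * P = 0\<^sub>m a n" using mult_minus_distrib_mat[OF Wc one_carrier_mat Pc] unfolding D_def by (simp only:)
  then have "W * ?I = W * P" by (rule minus_eq_zero_mat[OF mult_carrier_mat[OF Wc one_carrier_mat] mult_carrier_mat[OF Wc Pc]])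
  then show ?thesis using right_mult_one_mat[OF Wc] by (rule trans[OF sym])
qed

lemma sandwich_mult_assoc: assumes A: "A \<in> carrier_mat p q" and B: "B \<in> carrier_mat q p" and X: "X \<in> carrier_mat p p"
  shows "(A * B) * X * (A * B) = A * (B * X * A) * B"
proof -
  have AB: "A * B \<in> carrier_mat p p" using A B by simp
  have BX: "B * X \<in> carrier_mat q p" using B X by simp
  have BXA: "B * X * A \<in> carrier_mat q q" using BX A by simp
  have "(A * B) * X * (A * B) = (A * (B * X)) * (A * B)" using assoc_mult_mat[OF A B X] by (simp only:)
  also have "\<dots> = A * ((B * X) * (A * B))" using assoc_mult_mat[OF A BX AB] .
  also have "(B * X) * (A * B) = (B * X * A) * B" using assoc_mult_mat[OF BX A B] by (simp only:)
  also have "A * ((B * X * A) * B) = A * (B * X * A) * B" using assoc_mult_mat[OF A BXA B] by (simp only:)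
  finally show ?thesis .
qed

definition corner :: "nat list \<Rightarrow> nat \<Rightarrow> cmat \<Rightarrow> cmat set" where
  "corner ms d P = {X. right_blockdiag ms d d X \<and> P * X * P = X}"

lemma stinespring_range_eq_corner:
  assumes Wbd: "right_blockdiag ms m d W" and Pc: "P \<in> carrier_mat (d * tdim ms) (d * tdim ms)"
    and Ph: "adj P = P" and Pi: "P * P = P" and WW: "adj W * W = P"
  shows "{adj W * Y * W | Y. Y \<in> tensN m m ms} = corner ms d P"
proof (intro equalityI subsetI)
  let ?k = "tdim ms"
  have Wc: "W \<in> carrier_mat (m * ?k) (d * ?k)" using Wbd by (simp add: right_blockdiag_def)
  have aW: "adj W \<in> carrier_mat (d * ?k) (m * ?k)" using Wc by simp
  have WP: "W * P = W" using mult_proj_eq_self[OF Wc Pc Ph Pi WW] .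
  have PaW: "P * adj W = adj W" using adj_mult[OF Wc Pc] WP Ph by simp
  fix X
  assume "X \<in> {adj W * Y * W | Y. Y \<in> tensN m m ms}"
  then obtain Y where X: "X = adj W * Y * W" and Y: "right_blockdiag ms m m Y"
    by (auto simp: tensN_eq_right_blockdiag)
  have Yc: "Y \<in> carrier_mat (m * ?k) (m * ?k)" using Y by (simp add: right_blockdiag_def)
  have aWY: "adj W * Y \<in> carrier_mat (d * ?k) (m * ?k)" using aW Yc by simp
  have PaWY: "P * (adj W * Y) \<in> carrier_mat (d * ?k) (m * ?k)" using Pc aWY by simp
  have "P * X * P = (P * (adj W * Y)) * W * P"
    unfolding X using assoc_mult_mat[OF Pc aWY Wc] by simp
  also have "\<dots> = (P * (adj W * Y)) * (W * P)"
    using assoc_mult_mat[OF PaWY Wc Pc] .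
  also have "P * (adj W * Y) = adj W * Y"
    using assoc_mult_mat[OF Pc aW Yc] PaW by simp
  finally have "P * X * P = X" unfolding WP X .
  moreover have "right_blockdiag ms d d X"
    unfolding X by (rule right_blockdiag_mult[OF right_blockdiag_mult[OF right_blockdiag_adj[OF Wbd] Y] Wbd])
  ultimately show "X \<in> corner ms d P" by (simp add: corner_def)
next
  let ?k = "tdim ms"
  have Wc: "W \<in> carrier_mat (m * ?k) (d * ?k)" using Wbd by (simp add: right_blockdiag_def)
  fix X assume "X \<in> corner ms d P"
  then have Xbd: "right_blockdiag ms d d X" and PXP: "P * X * P = X" by (auto simp: corner_def)
  have Xc: "X \<in> carrier_mat (d * ?k) (d * ?k)" using Xbd by (simp add: right_blockdiag_def)
  have "X = adj W * (W * X * adj W) * W"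
    using PXP sandwich_mult_assoc[OF adj_carrier[OF Wc] Wc Xc] by (simp add: WW)
  moreover have "W * X * adj W \<in> tensN m m ms"
    unfolding tensN_eq_right_blockdiag
    using right_blockdiag_mult[OF right_blockdiag_mult[OF Wbd Xbd] right_blockdiag_adj[OF Wbd]] by simp
  ultimately show "X \<in> {adj W * Y * W | Y. Y \<in> tensN m m ms}" by blast
qed

lemma tildeS_eq_corner:
  assumes Pbd: "right_blockdiag ms (tdim ns) (tdim ns) P" and Ph: "adj P = P" and Pi: "P * P = P"
    and C: "CPhi ns ms Phi = P"
  shows "tildeS ns ms Phi = corner ms (tdim ns) P"
proof -
  have Pc: "P \<in> carrier_mat (tdim ns * tdim ms) (tdim ns * tdim ms)"
    using Pbd by (simp add: right_blockdiag_def)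
  have range: "{adj W * Y * W | Y. Y \<in> tensN m m ms} = corner ms (tdim ns) P"
    if "stinespring ns ms Phi m W" for m W
    using that C by (intro stinespring_range_eq_corner[OF _ Pc Ph Pi])
      (auto simp: stinespring_def tensN_eq_right_blockdiag)
  have "stinespring ns ms Phi (tdim ns) P"
    unfolding stinespring_def using Pbd Ph Pi C by (simp add: tensN_eq_right_blockdiag)
  then have "\<exists>S m W. stinespring ns ms Phi m W \<and> S = {adj W * Y * W | Y. Y \<in> tensN m m ms}"
    by blast
  then show ?thesis
    unfolding tildeS_def
  proof (rule someI2_ex)
    fix S assume "\<exists>m W. stinespring ns ms Phi m W \<and> S = {adj W * Y * W | Y. Y \<in> tensN m m ms}"
    then show "S = corner ms (tdim ns) P" using range by blast
  qed
qed

section \<open>Orthogonal projections onto subspaces of C^N\<close>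

definition cinner :: "complex vec \<Rightarrow> complex vec \<Rightarrow> complex" where
  "cinner u w = (\<Sum>t<dim_vec w. cnj (u $ t) * w $ t)"

definition pairwise_orth :: "complex vec list \<Rightarrow> bool" where
  "pairwise_orth es \<longleftrightarrow> (\<forall>i<length es. \<forall>j<length es. i \<noteq> j \<longrightarrow> cinner (es ! i) (es ! j) = 0)"

lemma cinner_self_neq_zero: assumes "u \<in> carrier_vec N" "u \<noteq> 0\<^sub>v N" shows "cinner u u \<noteq> 0"
proof
  assume "cinner u u = 0"
  then have z: "(\<Sum>t<N. cnj (u $ t) * u $ t) = 0" using assms by (simp add: cinner_def)
  have "u = 0\<^sub>v N"
    by (rule eq_vecI) (use assms sum_cnj_mult_self_eq_zero[OF z] in auto)
  then show False using assms by simp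
qed

lemma cnj_cinner_self: "cnj (cinner u u) = cinner u u"
  unfolding cinner_def by (simp add: mult.commute)

lemma cnj_cinner: assumes "dim_vec u = dim_vec w" shows "cnj (cinner u w) = cinner w u"
  unfolding cinner_def using assms by (simp add: mult.commute)

text \<open>Pad the coordinate matrix of the vectors with zero rows to a singular square matrix.\<close>

lemma exists_nontrivial_relation:
  fixes es :: "'a :: field vec list"
  assumes es: "set es \<subseteq> carrier_vec N" and nN: "N < length es"
  shows "\<exists>v \<in> carrier_vec (length es). v \<noteq> 0\<^sub>v (length es) \<and>
           (\<forall>t<N. (\<Sum>j<length es. es ! j $ t * v $ j) = 0)"
proof -
  let ?n = "length es"
  define E :: "'a mat" where "E = mat ?n ?n (\<lambda>(t,j). if t < N then es ! j $ t else 0)"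
  have Ec: "E \<in> carrier_mat ?n ?n" by (simp add: E_def)
  have "transpose_mat E *\<^sub>v unit_vec ?n (?n - 1) = 0\<^sub>v ?n"
  proof (rule eq_vecI)
    fix j assume "j < dim_vec (0\<^sub>v ?n :: 'a vec)"
    then have j: "j < ?n" by simp
    have "(transpose_mat E *\<^sub>v unit_vec ?n (?n - 1)) $ j = (\<Sum>t<?n. E $$ (t,j) * unit_vec ?n (?n - 1) $ t)"
      using j Ec by (simp add: scalar_prod_def atLeast0LessThan)
    also have "\<dots> = (\<Sum>t<?n. if t = ?n - 1 then E $$ (t,j) else 0)"
      by (rule sum.cong) auto
    also have "\<dots> = E $$ (?n - 1, j)" using nN by simp
    also have "\<dots> = 0" using j nN by (simp add: E_def)
    finally show "(transpose_mat E *\<^sub>v unit_vec ?n (?n - 1)) $ j = 0\<^sub>v ?n $ j" using j by simp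
  qed (use Ec in simp)
  moreover have "unit_vec ?n (?n - 1) \<noteq> (0\<^sub>v ?n :: 'a vec)" using nN by simp
  moreover have Etc: "transpose_mat E \<in> carrier_mat ?n ?n" using Ec by simp
  ultimately have "det (transpose_mat E) = 0"
    unfolding det_0_iff_vec_prod_zero[OF Etc] by (intro exI[of _ "unit_vec ?n (?n - 1)"]) simp
  then have "det E = 0" using det_transpose[OF Ec] by simp
  then obtain v where v: "v \<in> carrier_vec ?n" "v \<noteq> 0\<^sub>v ?n" "E *\<^sub>v v = 0\<^sub>v ?n"
    using det_0_iff_vec_prod_zero[OF Ec] by auto
  have "(\<Sum>j<?n. es ! j $ t * v $ j) = 0" if t: "t < N" for t
  proof -
    have "(E *\<^sub>v v) $ t = 0" using v t nN by simp
    moreover have "(E *\<^sub>v v) $ t = (\<Sum>j<?n. es ! j $ t * v $ j)"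
      using t nN v(1) Ec by (simp add: scalar_prod_def atLeast0LessThan E_def)
    ultimately show ?thesis by simp
  qed
  then show ?thesis using v by blast
qed

lemma length_orth_le:
  assumes es: "set es \<subseteq> carrier_vec N" and nz: "\<forall>e\<in>set es. e \<noteq> 0\<^sub>v N" and o: "pairwise_orth es"
  shows "length es \<le> N"
proof (rule ccontr)
  let ?n = "length es"
  assume "\<not> ?n \<le> N"
  then obtain v where v: "v \<in> carrier_vec ?n" "v \<noteq> 0\<^sub>v ?n"
    and rel: "\<And>t. t < N \<Longrightarrow> (\<Sum>j<?n. es ! j $ t * v $ j) = 0"
    using exists_nontrivial_relation[OF es] by auto
  have "v $ i = 0" if i: "i < ?n" for i
  proof -
    have esi: "es ! i \<in> carrier_vec N" "es ! i \<noteq> 0\<^sub>v N" using es nz nth_mem[OF i] by blast+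
    have dimj: "\<And>j. j < ?n \<Longrightarrow> dim_vec (es ! j) = N" using es nth_mem carrier_vecD by blast
    have "0 = (\<Sum>t<N. cnj (es ! i $ t) * (\<Sum>j<?n. es ! j $ t * v $ j))"
      by (simp add: rel)
    also have "\<dots> = (\<Sum>j<?n. v $ j * (\<Sum>t<N. cnj (es ! i $ t) * es ! j $ t))"
      by (simp add: sum_distrib_left ac_simps sum.swap[of _ "{..<N}"])
    also have "\<dots> = (\<Sum>j<?n. v $ j * cinner (es ! i) (es ! j))"
      by (rule sum.cong) (auto simp: cinner_def dimj)
    also have "\<dots> = (\<Sum>j<?n. if j = i then v $ i * cinner (es ! i) (es ! i) else 0)"
      using o i unfolding pairwise_orth_def by (intro sum.cong) auto
    also have "\<dots> = v $ i * cinner (es ! i) (es ! i)" using i by simp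
    finally show "v $ i = 0" using cinner_self_neq_zero[OF esi] by simp
  qed
  then have "v = 0\<^sub>v ?n" using v(1) by (intro eq_vecI) auto
  then show False using v by simp
qed
definition orth_family :: "nat \<Rightarrow> complex vec set \<Rightarrow> complex vec list \<Rightarrow> bool" where
  "orth_family N U es \<longleftrightarrow> set es \<subseteq> U \<and> (\<forall>e\<in>set es. e \<noteq> 0\<^sub>v N) \<and> pairwise_orth es"

definition vsubspace :: "nat \<Rightarrow> complex vec set \<Rightarrow> bool" where
  "vsubspace N U \<longleftrightarrow> U \<subseteq> carrier_vec N \<and> 0\<^sub>v N \<in> U \<and> (\<forall>u\<in>U. \<forall>w\<in>U. u + w \<in> U) \<and> (\<forall>u\<in>U. \<forall>a. a \<cdot>\<^sub>v u \<in> U)"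

definition fourier_coef :: "complex vec list \<Rightarrow> complex vec \<Rightarrow> nat \<Rightarrow> complex" where
  "fourier_coef es u j = cinner (es ! j) u / cinner (es ! j) (es ! j)"

definition gs_residual :: "nat \<Rightarrow> complex vec list \<Rightarrow> complex vec \<Rightarrow> nat \<Rightarrow> complex vec" where
  "gs_residual N es u m = vec N (\<lambda>t. u $ t - (\<Sum>j<m. fourier_coef es u j * es ! j $ t))"

lemma gs_residual_in: assumes U: "vsubspace N U" and es: "set es \<subseteq> U" and u: "u \<in> U" and m: "m \<le> length es"
  shows "gs_residual N es u m \<in> U"
  using m
proof (induction m)
  case 0
  have "gs_residual N es u 0 = u" using U u unfolding gs_residual_def vsubspace_def by (intro eq_vecI) auto
  then show ?case using u by simp
next
  case (Suc m)
  have "m < length es" using Suc(2) by simp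
  then have em: "es ! m \<in> U" using es nth_mem[of m es] by blast
  have emc: "es ! m \<in> carrier_vec N" using em U unfolding vsubspace_def by blast
  have "gs_residual N es u (Suc m) = gs_residual N es u m + (- fourier_coef es u m) \<cdot>\<^sub>v es ! m"
    unfolding gs_residual_def using emc by (intro eq_vecI) (auto simp: algebra_simps)
  moreover have "gs_residual N es u m \<in> U" using Suc by simp
  ultimately show ?case using em U unfolding vsubspace_def by metis
qed

lemma gs_residual_orth:
  assumes U: "vsubspace N U" and g: "orth_family N U es" and u: "u \<in> U" and i: "i < length es"
  shows "cinner (es ! i) (gs_residual N es u (length es)) = 0"
proof -
  let ?n = "length es" and ?e = "es ! i" and ?c = "fourier_coef es u"
  have esc: "\<And>j. j < ?n \<Longrightarrow> es ! j \<in> carrier_vec N"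
    using g U nth_mem unfolding orth_family_def vsubspace_def by blast
  have uc: "u \<in> carrier_vec N" using u U unfolding vsubspace_def by blast
  have esi: "?e \<in> carrier_vec N" "?e \<noteq> 0\<^sub>v N"
    using esc[OF i] g nth_mem[OF i] unfolding orth_family_def by blast+
  have "cinner ?e (gs_residual N es u ?n) =
      (\<Sum>t<N. cnj (?e $ t) * u $ t) - (\<Sum>t<N. \<Sum>j<?n. ?c j * (cnj (?e $ t) * es ! j $ t))"
    unfolding cinner_def gs_residual_def
    by (simp add: right_diff_distrib sum_subtractf sum_distrib_left ac_simps)
  also have "(\<Sum>t<N. \<Sum>j<?n. ?c j * (cnj (?e $ t) * es ! j $ t)) = (\<Sum>j<?n. \<Sum>t<N. ?c j * (cnj (?e $ t) * es ! j $ t))"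
    by (rule sum.swap)
  also have "\<dots> = (\<Sum>j<?n. ?c j * cinner ?e (es ! j))"
    using esc by (intro sum.cong refl) (metis carrier_vecD cinner_def lessThan_iff sum_distrib_left)
  also have "(\<Sum>t<N. cnj (?e $ t) * u $ t) = cinner ?e u"
    using uc by (simp add: cinner_def)
  also have "(\<Sum>j<?n. ?c j * cinner ?e (es ! j)) = (\<Sum>j<?n. if j = i then ?c i * cinner ?e ?e else 0)"
    using g i unfolding orth_family_def pairwise_orth_def by (intro sum.cong) auto
  also have "\<dots> = cinner ?e u"
    using i cinner_self_neq_zero[OF esi] by (simp add: fourier_coef_def)
  finally show ?thesis by simp
qed

lemma orth_family_snoc_residual:
  assumes U: "vsubspace N U" and g: "orth_family N U es" and u: "u \<in> U"
    and nz: "gs_residual N es u (length es) \<noteq> 0\<^sub>v N"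
  shows "orth_family N U (es @ [gs_residual N es u (length es)])"
  unfolding orth_family_def
proof (intro conjI)
  let ?r = "gs_residual N es u (length es)"
  have Uc: "U \<subseteq> carrier_vec N" using U by (simp add: vsubspace_def)
  have rU: "?r \<in> U" using gs_residual_in[OF U _ u] g by (simp add: orth_family_def)
  show "set (es @ [?r]) \<subseteq> U" using g rU by (simp add: orth_family_def)
  show "\<forall>e\<in>set (es @ [?r]). e \<noteq> 0\<^sub>v N" using g nz by (simp add: orth_family_def)
  have orth_r: "cinner (es ! j) ?r = 0" "cinner ?r (es ! j) = 0" if j: "j < length es" for j
  proof -
    show r: "cinner (es ! j) ?r = 0" by (rule gs_residual_orth[OF U g u j])
    have "es ! j \<in> carrier_vec N" using g Uc nth_mem[OF j] unfolding orth_family_def by blast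
    then have "cinner ?r (es ! j) = cnj (cinner (es ! j) ?r)"
      by (intro cnj_cinner[symmetric]) (simp add: gs_residual_def)
    then show "cinner ?r (es ! j) = 0" using r by simp
  qed
  show "pairwise_orth (es @ [?r])"
    unfolding pairwise_orth_def
  proof (intro allI impI)
    fix i j assume i: "i < length (es @ [?r])" and j: "j < length (es @ [?r])" and ij: "i \<noteq> j"
    consider "i < length es" "j < length es" | "i < length es" "j = length es" | "i = length es" "j < length es"
      using i j ij by fastforce
    then show "cinner ((es @ [?r]) ! i) ((es @ [?r]) ! j) = 0"
    proof cases
      case 1 then show ?thesis using ij g by (simp add: nth_append orth_family_def pairwise_orth_def)
    next
      case 2 then show ?thesis using orth_r by (simp add: nth_append)
    next
      case 3 then show ?thesis using orth_r by (simp add: nth_append)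
    qed
  qed
qed

text \<open>A longest orthogonal family in U exists because lengths are bounded by N, and it spans U:
  otherwise a nonzero Gram-Schmidt residual would extend it.\<close>

lemma orth_basis_exists:
  assumes U: "vsubspace N U"
  shows "\<exists>es. orth_family N U es \<and>
           (\<forall>u\<in>U. \<forall>t<N. u $ t = (\<Sum>j<length es. fourier_coef es u j * es ! j $ t))"
proof -
  have Uc: "U \<subseteq> carrier_vec N" using U by (simp add: vsubspace_def)
  define L where "L = {n. \<exists>es. orth_family N U es \<and> length es = n}"
  have Lmem: "\<And>es. orth_family N U es \<Longrightarrow> length es \<in> L" unfolding L_def by blast
  have "L \<subseteq> {..N}"
    using length_orth_le Uc unfolding L_def orth_family_def by fastforce
  then have finL: "finite L" using finite_subset by blast
  have "0 \<in> L" unfolding L_def orth_family_def pairwise_orth_def by (intro CollectI exI[of _ "[]"]) simp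
  then have "Max L \<in> L" using finL Max_in by blast
  then obtain es where g: "orth_family N U es" and len: "length es = Max L" by (auto simp: L_def)
  have "gs_residual N es u (length es) = 0\<^sub>v N" if u: "u \<in> U" for u
  proof (rule ccontr)
    assume "gs_residual N es u (length es) \<noteq> 0\<^sub>v N"
    from Lmem[OF orth_family_snoc_residual[OF U g u this]] have "Suc (Max L) \<in> L" using len by simp
    then show False using finL Max_ge not_less_eq_eq by blast
  qed
  then have "\<forall>u\<in>U. \<forall>t<N. u $ t = (\<Sum>j<length es. fourier_coef es u j * es ! j $ t)"
    by (metis (no_types, lifting) eq_iff_diff_eq_0 gs_residual_def index_vec index_zero_vec(1))
  then show ?thesis using g by blast
qed

definition orth_proj :: "nat \<Rightarrow> complex vec list \<Rightarrow> cmat" where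
  "orth_proj N es = mat N N (\<lambda>(r,s). \<Sum>j<length es. es ! j $ r * cnj (es ! j $ s) / cinner (es ! j) (es ! j))"

definition outer_prod :: "nat \<Rightarrow> complex vec \<Rightarrow> complex vec \<Rightarrow> cmat" where
  "outer_prod N u w = mat N N (\<lambda>(r,s). u $ r * cnj (w $ s))"

lemma orth_proj_carrier[simp]: "orth_proj N es \<in> carrier_mat N N" by (simp add: orth_proj_def)
lemma dim_orth_proj[simp]: "dim_row (orth_proj N es) = N" "dim_col (orth_proj N es) = N" by (simp_all add: orth_proj_def)
lemma orth_proj_index: "r < N \<Longrightarrow> s < N \<Longrightarrow> orth_proj N es $$ (r,s) = (\<Sum>j<length es. es ! j $ r * cnj (es ! j $ s) / cinner (es ! j) (es ! j))"
  by (simp add: orth_proj_def)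
lemma outer_prod_carrier[simp]: "outer_prod N u w \<in> carrier_mat N N" by (simp add: outer_prod_def)
lemma dim_outer_prod[simp]: "dim_row (outer_prod N u w) = N" "dim_col (outer_prod N u w) = N" by (simp_all add: outer_prod_def)
lemma outer_prod_index: "r < N \<Longrightarrow> s < N \<Longrightarrow> outer_prod N u w $$ (r,s) = u $ r * cnj (w $ s)"
  by (simp add: outer_prod_def)

lemma lincomb_in_vsubspace: assumes U: "vsubspace N U" and es: "set es \<subseteq> U" and m: "m \<le> length es"
  shows "vec N (\<lambda>r. \<Sum>j<m. c j * es ! j $ r) \<in> U"
  using m
proof (induction m)
  case 0
  have "vec N (\<lambda>r. \<Sum>j<0. c j * es ! j $ r) = 0\<^sub>v N" by (intro eq_vecI) auto
  then show ?case using U by (simp add: vsubspace_def)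
next
  case (Suc m)
  have "m < length es" using Suc(2) by simp
  then have em: "es ! m \<in> U" using es nth_mem[of m es] by blast
  have emc: "es ! m \<in> carrier_vec N" using em U unfolding vsubspace_def by blast
  have eq: "vec N (\<lambda>r. \<Sum>j<Suc m. c j * es ! j $ r) = vec N (\<lambda>r. \<Sum>j<m. c j * es ! j $ r) + c m \<cdot>\<^sub>v es ! m"
    using emc by (intro eq_vecI) auto
  have IH: "vec N (\<lambda>r. \<Sum>j<m. c j * es ! j $ r) \<in> U" using Suc by simp
  have addU: "\<And>a b. a \<in> U \<Longrightarrow> b \<in> U \<Longrightarrow> a + b \<in> U" and smU: "\<And>a x. x \<in> U \<Longrightarrow> a \<cdot>\<^sub>v x \<in> U"
    using U unfolding vsubspace_def by blast+
  show ?case unfolding eq by (rule addU[OF IH smU[OF em]])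
qed

lemma orth_proj_mult_vec: assumes v: "v \<in> carrier_vec N" and es: "set es \<subseteq> carrier_vec N"
  shows "orth_proj N es *\<^sub>v v = vec N (\<lambda>r. \<Sum>j<length es. fourier_coef es v j * es ! j $ r)"
proof (rule eq_vecI)
  fix r assume "r < dim_vec (vec N (\<lambda>r. \<Sum>j<length es. fourier_coef es v j * es ! j $ r))"
  then have r: "r < N" by simp
  have dv: "dim_vec v = N" using v by simp
  have "(orth_proj N es *\<^sub>v v) $ r = (\<Sum>s<N. (\<Sum>j<length es. es ! j $ r * cnj (es ! j $ s) / cinner (es ! j) (es ! j)) * v $ s)"
    using r dv by (simp add: scalar_prod_def atLeast0LessThan orth_proj_index)
  also have "\<dots> = (\<Sum>s<N. \<Sum>j<length es. es ! j $ r / cinner (es ! j) (es ! j) * (cnj (es ! j $ s) * v $ s))"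
    by (rule sum.cong[OF refl], subst sum_distrib_right, rule sum.cong[OF refl]) simp
  also have "\<dots> = (\<Sum>j<length es. \<Sum>s<N. es ! j $ r / cinner (es ! j) (es ! j) * (cnj (es ! j $ s) * v $ s))"
    by (rule sum.swap)
  also have "\<dots> = (\<Sum>j<length es. fourier_coef es v j * es ! j $ r)"
  proof (rule sum.cong[OF refl])
    fix j assume "j \<in> {..<length es}"
    have ipv: "cinner (es ! j) v = (\<Sum>s<N. cnj (es ! j $ s) * v $ s)" unfolding cinner_def dv ..
    have "(\<Sum>s<N. es ! j $ r / cinner (es ! j) (es ! j) * (cnj (es ! j $ s) * v $ s)) = es ! j $ r / cinner (es ! j) (es ! j) * cinner (es ! j) v"
      unfolding ipv by (rule sum_distrib_left[symmetric])
    then show "(\<Sum>s<N. es ! j $ r / cinner (es ! j) (es ! j) * (cnj (es ! j $ s) * v $ s)) = fourier_coef es v j * es ! j $ r"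
      unfolding fourier_coef_def by simp
  qed
  finally show "(orth_proj N es *\<^sub>v v) $ r = vec N (\<lambda>r. \<Sum>j<length es. fourier_coef es v j * es ! j $ r) $ r" using r by simp
qed simp

lemma orth_proj_fix: assumes U: "vsubspace N U" and g: "orth_family N U es"
  and onb: "\<forall>u\<in>U. \<forall>t<N. u $ t = (\<Sum>j<length es. fourier_coef es u j * es ! j $ t)"
  and u: "u \<in> U"
  shows "orth_proj N es *\<^sub>v u = u"
proof -
  have Uc: "U \<subseteq> carrier_vec N" using U by (simp add: vsubspace_def)
  have esc: "set es \<subseteq> carrier_vec N" using g Uc by (auto simp: orth_family_def)
  have uc: "u \<in> carrier_vec N" using u Uc by blast
  show ?thesis unfolding orth_proj_mult_vec[OF uc esc]
    by (rule eq_vecI) (use onb u uc in auto)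
qed

lemma orth_proj_adj: "adj (orth_proj N es) = orth_proj N es"
proof (rule eq_matI)
  fix r s assume "r < dim_row (orth_proj N es)" "s < dim_col (orth_proj N es)"
  then have r: "r < N" and s: "s < N" by auto
  have "adj (orth_proj N es) $$ (r,s) = cnj (\<Sum>j<length es. es ! j $ s * cnj (es ! j $ r) / cinner (es ! j) (es ! j))"
    using r s by (simp add: orth_proj_index)
  also have "\<dots> = (\<Sum>j<length es. es ! j $ r * cnj (es ! j $ s) / cinner (es ! j) (es ! j))"
    by (simp add: cnj_cinner_self mult.commute)
  finally show "adj (orth_proj N es) $$ (r,s) = orth_proj N es $$ (r,s)" using r s by (simp add: orth_proj_index)
qed auto

lemma orth_proj_col_in: assumes U: "vsubspace N U" and g: "orth_family N U es" and t: "t < N"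
  shows "col (orth_proj N es) t \<in> U"
proof -
  have "col (orth_proj N es) t = vec N (\<lambda>r. \<Sum>j<length es. (cnj (es ! j $ t) / cinner (es ! j) (es ! j)) * es ! j $ r)"
    using t by (intro eq_vecI) (auto simp: orth_proj_index ac_simps)
  also have "\<dots> \<in> U" using g U by (intro lincomb_in_vsubspace) (auto simp: orth_family_def)
  finally show ?thesis .
qed

lemma orth_proj_idem: assumes U: "vsubspace N U" and g: "orth_family N U es"
  and onb: "\<forall>u\<in>U. \<forall>t<N. u $ t = (\<Sum>j<length es. fourier_coef es u j * es ! j $ t)"
  shows "orth_proj N es * orth_proj N es = orth_proj N es"
proof (rule eq_matI)
  fix r s assume "r < dim_row (orth_proj N es)" "s < dim_col (orth_proj N es)"
  then have r: "r < N" and s: "s < N" by auto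
  have "(orth_proj N es * orth_proj N es) $$ (r,s) = (orth_proj N es *\<^sub>v col (orth_proj N es) s) $ r" using r s by simp
  also have "orth_proj N es *\<^sub>v col (orth_proj N es) s = col (orth_proj N es) s"
    by (rule orth_proj_fix[OF U g onb orth_proj_col_in[OF U g s]])
  finally show "(orth_proj N es * orth_proj N es) $$ (r,s) = orth_proj N es $$ (r,s)" using r s by simp
qed auto

lemma mult_outer_prod_left: assumes P: "P \<in> carrier_mat N N" and u: "u \<in> carrier_vec N"
  shows "P * outer_prod N u w = outer_prod N (P *\<^sub>v u) w"
proof (rule eq_matI)
  fix r s assume "r < dim_row (outer_prod N (P *\<^sub>v u) w)" "s < dim_col (outer_prod N (P *\<^sub>v u) w)"
  then have r: "r < N" and s: "s < N" by auto
  have "(P * outer_prod N u w) $$ (r,s) = (\<Sum>t<N. P $$ (r,t) * (u $ t * cnj (w $ s)))"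
    using P r s by (simp add: scalar_prod_def atLeast0LessThan outer_prod_index)
  also have "\<dots> = (\<Sum>t<N. P $$ (r,t) * u $ t) * cnj (w $ s)"
    unfolding sum_distrib_right by (rule sum.cong[OF refl]) (simp add: mult.assoc)
  also have "\<dots> = outer_prod N (P *\<^sub>v u) w $$ (r,s)"
    using P u r s by (simp add: scalar_prod_def atLeast0LessThan outer_prod_index)
  finally show "(P * outer_prod N u w) $$ (r,s) = outer_prod N (P *\<^sub>v u) w $$ (r,s)" .
qed (use P in auto)

lemma mult_outer_prod_right: assumes P: "P \<in> carrier_mat N N" and w: "w \<in> carrier_vec N"
  shows "outer_prod N u w * P = outer_prod N u (adj P *\<^sub>v w)"
proof (rule eq_matI)
  fix r s assume "r < dim_row (outer_prod N u (adj P *\<^sub>v w))" "s < dim_col (outer_prod N u (adj P *\<^sub>v w))"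
  then have r: "r < N" and s: "s < N" by auto
  have "(outer_prod N u w * P) $$ (r,s) = (\<Sum>t<N. (u $ r * cnj (w $ t)) * P $$ (t,s))"
    using P r s by (simp add: scalar_prod_def atLeast0LessThan outer_prod_index)
  also have "\<dots> = u $ r * cnj (\<Sum>t<N. cnj (P $$ (t,s)) * w $ t)"
  proof -
    have "cnj (\<Sum>t<N. cnj (P $$ (t,s)) * w $ t) = (\<Sum>t<N. P $$ (t,s) * cnj (w $ t))" by simp
    then show ?thesis by (simp add: ac_simps sum_distrib_left)
  qed
  also have "\<dots> = outer_prod N u (adj P *\<^sub>v w) $$ (r,s)"
    using P w r s by (simp add: scalar_prod_def atLeast0LessThan outer_prod_index)
  finally show "(outer_prod N u w * P) $$ (r,s) = outer_prod N u (adj P *\<^sub>v w) $$ (r,s)" .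
qed (use P in auto)

lemma outer_prod_sandwich: assumes P: "P \<in> carrier_mat N N" and Ph: "adj P = P"
  and u: "u \<in> carrier_vec N" and w: "w \<in> carrier_vec N" and Pu: "P *\<^sub>v u = u" and Pw: "P *\<^sub>v w = w"
  shows "P * outer_prod N u w * P = outer_prod N u w"
  using mult_outer_prod_left[OF P u] mult_outer_prod_right[OF P w] Ph Pu Pw by simp

lemma orth_proj_herm_index: "r < N \<Longrightarrow> s < N \<Longrightarrow> cnj (orth_proj N es $$ (s,r)) = orth_proj N es $$ (r,s)"
proof -
  assume r: "r < N" and s: "s < N"
  have "adj (orth_proj N es) $$ (r,s) = cnj (orth_proj N es $$ (s,r))" using r s by simp
  then show ?thesis using orth_proj_adj[of N es] by simp
qed

lemma sandwich_fixed_in_span_outer: assumes U: "vsubspace N U" and g: "orth_family N U es" and Q: "Q \<in> carrier_mat N N"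
  and PQP: "orth_proj N es * Q * orth_proj N es = Q"
  shows "Q \<in> mspan N N {outer_prod N u w | u w. u \<in> U \<and> w \<in> U}"
proof -
  let ?P = "orth_proj N es"
  let ?G = "{outer_prod N u w | u w. u \<in> U \<and> w \<in> U}"
  define f where "f tt = Q $$ tt \<cdot>\<^sub>m outer_prod N (col ?P (fst tt)) (col ?P (snd tt))" for tt
  have "Q = msum N N f ({..<N} \<times> {..<N})"
  proof (rule eq_matI)
    fix r s assume "r < dim_row (msum N N f ({..<N} \<times> {..<N}))" "s < dim_col (msum N N f ({..<N} \<times> {..<N}))"
    then have r: "r < N" and s: "s < N" by auto
    have "msum N N f ({..<N} \<times> {..<N}) $$ (r,s) = (\<Sum>tt\<in>{..<N} \<times> {..<N}. f tt $$ (r,s))"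
      using r s by (simp add: index_msum)
    also have "\<dots> = (\<Sum>t<N. \<Sum>t'<N. f (t,t') $$ (r,s))"
      by (subst sum.cartesian_product) (simp add: case_prod_unfold)
    also have "\<dots> = (\<Sum>t<N. \<Sum>t'<N. ?P $$ (r,t) * Q $$ (t,t') * ?P $$ (t',s))"
    proof (rule sum.cong[OF refl], rule sum.cong[OF refl])
      fix t t' assume "t \<in> {..<N}" "t' \<in> {..<N}"
      then have t: "t < N" and t': "t' < N" by auto
      have "f (t,t') $$ (r,s) = Q $$ (t,t') * (?P $$ (r,t) * cnj (?P $$ (s,t')))"
        using r s t t' by (simp add: f_def outer_prod_index)
      also have "cnj (?P $$ (s,t')) = ?P $$ (t',s)" using orth_proj_herm_index[OF t' s] .
      finally show "f (t,t') $$ (r,s) = ?P $$ (r,t) * Q $$ (t,t') * ?P $$ (t',s)" by simp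
    qed
    also have "\<dots> = (\<Sum>t'<N. \<Sum>t<N. ?P $$ (r,t) * Q $$ (t,t') * ?P $$ (t',s))"
      by (rule sum.swap)
    also have "\<dots> = (\<Sum>t'<N. (\<Sum>t<N. ?P $$ (r,t) * Q $$ (t,t')) * ?P $$ (t',s))"
      by (simp add: sum_distrib_right)
    also have "\<dots> = (?P * Q * ?P) $$ (r,s)"
      using r s Q by (simp add: scalar_prod_def atLeast0LessThan)
    finally show "Q $$ (r,s) = msum N N f ({..<N} \<times> {..<N}) $$ (r,s)" using PQP by simp
  qed (use Q in auto)
  also have "\<dots> \<in> mspan N N ?G"
  proof (rule msum_in_msubspace)
    show "msubspace N N (mspan N N ?G)" by (rule msubspace_mspan) auto
    show "finite ({..<N} \<times> {..<N})" by simp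
    fix tt assume "tt \<in> {..<N} \<times> {..<N}"
    then have "col ?P (fst tt) \<in> U" "col ?P (snd tt) \<in> U"
      using orth_proj_col_in[OF U g] by auto
    then have "outer_prod N (col ?P (fst tt)) (col ?P (snd tt)) \<in> mspan N N ?G"
      by (intro mspan_base) blast
    then show "f tt \<in> mspan N N ?G" unfolding f_def by (rule mspan_smult)
  qed
  finally show ?thesis .
qed

lemma msubspace_sandwich_fixed: assumes P: "P \<in> carrier_mat N N"
  shows "msubspace N N {Q \<in> carrier_mat N N. P * Q * P = Q}"
  unfolding msubspace_def
proof (intro conjI ballI allI)
  show "{Q \<in> carrier_mat N N. P * Q * P = Q} \<subseteq> carrier_mat N N" by auto
  show "0\<^sub>m N N \<in> {Q \<in> carrier_mat N N. P * Q * P = Q}" using P by simp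
  fix x y assume x: "x \<in> {Q \<in> carrier_mat N N. P * Q * P = Q}" and y: "y \<in> {Q \<in> carrier_mat N N. P * Q * P = Q}"
  have xc: "x \<in> carrier_mat N N" and yc: "y \<in> carrier_mat N N" and px: "P * x * P = x" and py: "P * y * P = y"
    using x y by auto
  have "P * (x + y) = P * x + P * y" by (rule mult_add_distrib_mat[OF P xc yc])
  then have "P * (x + y) * P = (P * x + P * y) * P" by simp
  also have "\<dots> = P * x * P + P * y * P" by (rule add_mult_distrib_mat[OF _ _ P]) (use P xc yc in auto)
  finally have "P * (x + y) * P = P * x * P + P * y * P" .
  then show "x + y \<in> {Q \<in> carrier_mat N N. P * Q * P = Q}" using px py xc yc by simp
next
  fix x and a :: complex assume x: "x \<in> {Q \<in> carrier_mat N N. P * Q * P = Q}"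
  have xc: "x \<in> carrier_mat N N" and px: "P * x * P = x" using x by auto
  have "P * (a \<cdot>\<^sub>m x) = a \<cdot>\<^sub>m (P * x)" by (rule mult_smult_distrib[OF P xc])
  then have "P * (a \<cdot>\<^sub>m x) * P = (a \<cdot>\<^sub>m (P * x)) * P" by simp
  also have "\<dots> = a \<cdot>\<^sub>m (P * x * P)" by (rule mult_smult_assoc_mat) (use P xc in auto)
  finally have "P * (a \<cdot>\<^sub>m x) * P = a \<cdot>\<^sub>m (P * x * P)" .
  then show "a \<cdot>\<^sub>m x \<in> {Q \<in> carrier_mat N N. P * Q * P = Q}" using px xc by simp
qed

section \<open>Decomposable subspaces closed under adjoints\<close>

definition vec_of_mat :: "nat \<Rightarrow> nat \<Rightarrow> cmat \<Rightarrow> complex vec" where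
  "vec_of_mat d l x = vec (d * l) (\<lambda>r. x $$ (r div l, r mod l))"

lemma vec_of_mat_carrier[simp]: "vec_of_mat d l x \<in> carrier_vec (d * l)" by (simp add: vec_of_mat_def)
lemma dim_vec_of_mat[simp]: "dim_vec (vec_of_mat d l x) = d * l" by (simp add: vec_of_mat_def)
lemma vec_of_mat_index: "r < d * l \<Longrightarrow> vec_of_mat d l x $ r = x $$ (r div l, r mod l)" by (simp add: vec_of_mat_def)

lemma vec_of_mat_add: assumes "x \<in> carrier_mat d l" "y \<in> carrier_mat d l" shows "vec_of_mat d l (x + y) = vec_of_mat d l x + vec_of_mat d l y"
  by (rule eq_vecI) (use assms in \<open>auto simp: vec_of_mat_index less_mult_imp_div_less index_mod_less\<close>)

lemma vec_of_mat_smult: assumes "x \<in> carrier_mat d l" shows "vec_of_mat d l (a \<cdot>\<^sub>m x) = a \<cdot>\<^sub>v vec_of_mat d l x"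
  by (rule eq_vecI) (use assms in \<open>auto simp: vec_of_mat_index less_mult_imp_div_less index_mod_less\<close>)

lemma vec_of_mat_zero: "vec_of_mat d l (0\<^sub>m d l) = 0\<^sub>v (d * l)"
  by (rule eq_vecI) (auto simp: vec_of_mat_index less_mult_imp_div_less index_mod_less)

lemma vec_of_mat_eq_zero: assumes x: "x \<in> carrier_mat d l" and z: "vec_of_mat d l x = 0\<^sub>v (d * l)" shows "x = 0\<^sub>m d l"
proof (rule eq_matI)
  fix i p assume "i < dim_row (0\<^sub>m d l)" "p < dim_col (0\<^sub>m d l)"
  then have i: "i < d" and p: "p < l" by auto
  have r: "i * l + p < d * l" by (rule index_comb_less[OF i p])
  have "(i * l + p) div l = i" "(i * l + p) mod l = p" using p by auto
  then have "vec_of_mat d l x $ (i * l + p) = x $$ (i,p)" using vec_of_mat_index[OF r, of x] by simp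
  then show "x $$ (i,p) = 0\<^sub>m d l $$ (i,p)" using z r i p by simp
qed (use x in auto)

lemma sigma_carrier[simp]: "sigma d l x y \<in> carrier_mat (d * l) (d * l)" by (simp add: sigma_def)
lemma dim_sigma[simp]: "dim_row (sigma d l x y) = d * l" "dim_col (sigma d l x y) = d * l" by (simp_all add: sigma_def)

lemma sigma_eq_outer_prod: assumes x: "x \<in> carrier_mat d l" and y: "y \<in> carrier_mat l d"
  shows "sigma d l x y = outer_prod (d * l) (vec_of_mat d l x) (vec_of_mat d l (adj y))"
proof (rule eq_matI)
  fix r s assume "r < dim_row (outer_prod (d * l) (vec_of_mat d l x) (vec_of_mat d l (adj y)))" "s < dim_col (outer_prod (d * l) (vec_of_mat d l x) (vec_of_mat d l (adj y)))"
  then have r: "r < d * l" and s: "s < d * l" by auto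
  show "sigma d l x y $$ (r,s) = outer_prod (d * l) (vec_of_mat d l x) (vec_of_mat d l (adj y)) $$ (r,s)"
    using r s x y less_mult_imp_div_less[OF s] index_mod_less[OF s] by (simp add: sigma_def outer_prod_index vec_of_mat_index)
qed auto

lemma adj_sigma: assumes x: "x \<in> carrier_mat d l" and y: "y \<in> carrier_mat l d"
  shows "adj (sigma d l x y) = sigma d l (adj y) (adj x)"
proof (rule eq_matI)
  fix r s assume "r < dim_row (sigma d l (adj y) (adj x))" "s < dim_col (sigma d l (adj y) (adj x))"
  then have r: "r < d * l" and s: "s < d * l" by auto
  show "adj (sigma d l x y) $$ (r,s) = sigma d l (adj y) (adj x) $$ (r,s)"
    using r s x y less_mult_imp_div_less[OF s] index_mod_less[OF s] less_mult_imp_div_less[OF r] index_mod_less[OF r] by (simp add: sigma_def mult.commute)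
qed auto

lemma sigma_zero_left: "sigma d l (0\<^sub>m d l) y = 0\<^sub>m (d * l) (d * l)"
  by (rule eq_matI) (auto simp: sigma_def less_mult_imp_div_less index_mod_less)

lemma sigma_zero_right: "sigma d l x (0\<^sub>m l d) = 0\<^sub>m (d * l) (d * l)"
  by (rule eq_matI) (auto simp: sigma_def less_mult_imp_div_less index_mod_less)

definition left_slice :: "nat \<Rightarrow> nat \<Rightarrow> complex vec \<Rightarrow> cmat \<Rightarrow> cmat" where
  "left_slice d l z Q = mat d l (\<lambda>(i,p). \<Sum>s<d*l. Q $$ (i*l+p, s) * z $ s)"

definition right_slice :: "nat \<Rightarrow> nat \<Rightarrow> complex vec \<Rightarrow> cmat \<Rightarrow> cmat" where
  "right_slice d l z Q = mat l d (\<lambda>(q,j). \<Sum>r<d*l. z $ r * Q $$ (r, j*l+q))"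

lemma left_slice_sigma: assumes x: "x \<in> carrier_mat d l" and y: "y \<in> carrier_mat l d"
  shows "left_slice d l z (sigma d l x y) = (\<Sum>s<d*l. y $$ (s mod l, s div l) * z $ s) \<cdot>\<^sub>m x"
proof (rule eq_matI)
  fix i p assume "i < dim_row ((\<Sum>s<d*l. y $$ (s mod l, s div l) * z $ s) \<cdot>\<^sub>m x)" "p < dim_col ((\<Sum>s<d*l. y $$ (s mod l, s div l) * z $ s) \<cdot>\<^sub>m x)"
  then have i: "i < d" and p: "p < l" using x by auto
  have r: "i * l + p < d * l" by (rule index_comb_less[OF i p])
  have "left_slice d l z (sigma d l x y) $$ (i,p) = (\<Sum>s<d*l. x $$ (i,p) * y $$ (s mod l, s div l) * z $ s)"
    unfolding left_slice_def using i p r index_comb_divmod[OF p, of i] by (simp add: sigma_def)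
  also have "\<dots> = (\<Sum>s<d*l. y $$ (s mod l, s div l) * z $ s) * x $$ (i,p)"
    unfolding sum_distrib_right by (rule sum.cong[OF refl]) (simp add: ac_simps)
  finally show "left_slice d l z (sigma d l x y) $$ (i,p) = ((\<Sum>s<d*l. y $$ (s mod l, s div l) * z $ s) \<cdot>\<^sub>m x) $$ (i,p)"
    using i p x by simp
qed (use x in \<open>auto simp: left_slice_def\<close>)

lemma right_slice_sigma: assumes x: "x \<in> carrier_mat d l" and y: "y \<in> carrier_mat l d"
  shows "right_slice d l z (sigma d l x y) = (\<Sum>r<d*l. z $ r * x $$ (r div l, r mod l)) \<cdot>\<^sub>m y"
proof (rule eq_matI)
  fix q j assume "q < dim_row ((\<Sum>r<d*l. z $ r * x $$ (r div l, r mod l)) \<cdot>\<^sub>m y)" "j < dim_col ((\<Sum>r<d*l. z $ r * x $$ (r div l, r mod l)) \<cdot>\<^sub>m y)"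
  then have q: "q < l" and j: "j < d" using y by auto
  have s: "j * l + q < d * l" by (rule index_comb_less[OF j q])
  have "right_slice d l z (sigma d l x y) $$ (q,j) = (\<Sum>r<d*l. z $ r * (x $$ (r div l, r mod l) * y $$ (q,j)))"
    unfolding right_slice_def using q j s index_comb_divmod[OF q, of j] by (simp add: sigma_def)
  also have "\<dots> = (\<Sum>r<d*l. z $ r * x $$ (r div l, r mod l)) * y $$ (q,j)"
    unfolding sum_distrib_right by (rule sum.cong[OF refl]) (simp add: ac_simps)
  finally show "right_slice d l z (sigma d l x y) $$ (q,j) = ((\<Sum>r<d*l. z $ r * x $$ (r div l, r mod l)) \<cdot>\<^sub>m y) $$ (q,j)"
    using q j y by simp
qed (use y in \<open>auto simp: right_slice_def\<close>)

lemma left_slice_add: assumes "Q \<in> carrier_mat (d*l) (d*l)" "Q' \<in> carrier_mat (d*l) (d*l)"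
  shows "left_slice d l z (Q + Q') = left_slice d l z Q + left_slice d l z Q'"
proof (rule eq_matI)
  fix i p assume "i < dim_row (left_slice d l z Q + left_slice d l z Q')" "p < dim_col (left_slice d l z Q + left_slice d l z Q')"
  then have i: "i < d" and p: "p < l" by (auto simp: left_slice_def)
  have r: "i * l + p < d * l" by (rule index_comb_less[OF i p])
  show "left_slice d l z (Q + Q') $$ (i,p) = (left_slice d l z Q + left_slice d l z Q') $$ (i,p)"
    using assms i p r by (simp add: left_slice_def sum.distrib algebra_simps)
qed (auto simp: left_slice_def)

lemma left_slice_smult: assumes "Q \<in> carrier_mat (d*l) (d*l)"
  shows "left_slice d l z (a \<cdot>\<^sub>m Q) = a \<cdot>\<^sub>m left_slice d l z Q"
proof (rule eq_matI)
  fix i p assume "i < dim_row (a \<cdot>\<^sub>m left_slice d l z Q)" "p < dim_col (a \<cdot>\<^sub>m left_slice d l z Q)"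
  then have i: "i < d" and p: "p < l" by (auto simp: left_slice_def)
  have r: "i * l + p < d * l" by (rule index_comb_less[OF i p])
  show "left_slice d l z (a \<cdot>\<^sub>m Q) $$ (i,p) = (a \<cdot>\<^sub>m left_slice d l z Q) $$ (i,p)"
    using assms i p r by (simp add: left_slice_def sum_distrib_left ac_simps)
qed (auto simp: left_slice_def)

lemma left_slice_zero: "left_slice d l z (0\<^sub>m (d*l) (d*l)) = 0\<^sub>m d l"
  by (rule eq_matI) (auto simp: left_slice_def index_comb_less)

lemma right_slice_add: assumes "Q \<in> carrier_mat (d*l) (d*l)" "Q' \<in> carrier_mat (d*l) (d*l)"
  shows "right_slice d l z (Q + Q') = right_slice d l z Q + right_slice d l z Q'"
proof (rule eq_matI)
  fix q j assume "q < dim_row (right_slice d l z Q + right_slice d l z Q')" "j < dim_col (right_slice d l z Q + right_slice d l z Q')"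
  then have q: "q < l" and j: "j < d" by (auto simp: right_slice_def)
  have s: "j * l + q < d * l" by (rule index_comb_less[OF j q])
  show "right_slice d l z (Q + Q') $$ (q,j) = (right_slice d l z Q + right_slice d l z Q') $$ (q,j)"
    using assms q j s by (simp add: right_slice_def sum.distrib algebra_simps)
qed (auto simp: right_slice_def)

lemma right_slice_smult: assumes "Q \<in> carrier_mat (d*l) (d*l)"
  shows "right_slice d l z (a \<cdot>\<^sub>m Q) = a \<cdot>\<^sub>m right_slice d l z Q"
proof (rule eq_matI)
  fix q j assume "q < dim_row (a \<cdot>\<^sub>m right_slice d l z Q)" "j < dim_col (a \<cdot>\<^sub>m right_slice d l z Q)"
  then have q: "q < l" and j: "j < d" by (auto simp: right_slice_def)
  have s: "j * l + q < d * l" by (rule index_comb_less[OF j q])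
  show "right_slice d l z (a \<cdot>\<^sub>m Q) $$ (q,j) = (a \<cdot>\<^sub>m right_slice d l z Q) $$ (q,j)"
    using assms q j s by (simp add: right_slice_def sum_distrib_left ac_simps)
qed (auto simp: right_slice_def)

lemma right_slice_zero: "right_slice d l z (0\<^sub>m (d*l) (d*l)) = 0\<^sub>m l d"
  by (rule eq_matI) (auto simp: right_slice_def index_comb_less)

lemma smult_inverse_cancel_mat: fixes c :: complex assumes "c \<noteq> 0" shows "(1 / c) \<cdot>\<^sub>m (c \<cdot>\<^sub>m A) = A"
  by (rule eq_matI) (use assms in auto)

lemma sigma_image_carrier: "{sigma d l x y | x y. x \<in> V1 \<and> y \<in> V2} \<subseteq> carrier_mat (d*l) (d*l)"
  by auto

lemma left_slice_mspan: assumes V1: "msubspace d l V1" and V2: "V2 \<subseteq> carrier_mat l d"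
  and Q: "Q \<in> mspan (d*l) (d*l) {sigma d l x y | x y. x \<in> V1 \<and> y \<in> V2}"
  shows "left_slice d l z Q \<in> V1"
  using Q
proof (induction rule: mspan.induct)
  case mspan_zero then show ?case using V1 by (simp add: left_slice_zero msubspace_def)
next
  case (mspan_base Q)
  then obtain x y where Q: "Q = sigma d l x y" and x: "x \<in> V1" and y: "y \<in> V2" by auto
  have xc: "x \<in> carrier_mat d l" using x V1 by (auto simp: msubspace_def)
  have yc: "y \<in> carrier_mat l d" using y V2 by auto
  show ?case unfolding Q left_slice_sigma[OF xc yc] using x V1 by (simp add: msubspace_def)
next
  case (mspan_add Q Q')
  have "Q \<in> carrier_mat (d*l) (d*l)" "Q' \<in> carrier_mat (d*l) (d*l)"
    using mspan_carrier[OF sigma_image_carrier mspan_add(1)] mspan_carrier[OF sigma_image_carrier mspan_add(2)] by auto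
  then show ?case using mspan_add V1 by (simp add: left_slice_add msubspace_def)
next
  case (mspan_smult Q a)
  have "Q \<in> carrier_mat (d*l) (d*l)" using mspan_carrier[OF sigma_image_carrier mspan_smult(1)] .
  then show ?case using mspan_smult V1 by (simp add: left_slice_smult msubspace_def)
qed

lemma right_slice_mspan: assumes V1: "V1 \<subseteq> carrier_mat d l" and V2: "msubspace l d V2"
  and Q: "Q \<in> mspan (d*l) (d*l) {sigma d l x y | x y. x \<in> V1 \<and> y \<in> V2}"
  shows "right_slice d l z Q \<in> V2"
  using Q
proof (induction rule: mspan.induct)
  case mspan_zero then show ?case using V2 by (simp add: right_slice_zero msubspace_def)
next
  case (mspan_base Q)
  then obtain x y where Q: "Q = sigma d l x y" and x: "x \<in> V1" and y: "y \<in> V2" by auto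
  have xc: "x \<in> carrier_mat d l" using x V1 by auto
  have yc: "y \<in> carrier_mat l d" using y V2 by (auto simp: msubspace_def)
  show ?case unfolding Q right_slice_sigma[OF xc yc] using y V2 by (simp add: msubspace_def)
next
  case (mspan_add Q Q')
  have "Q \<in> carrier_mat (d*l) (d*l)" "Q' \<in> carrier_mat (d*l) (d*l)"
    using mspan_carrier[OF sigma_image_carrier mspan_add(1)] mspan_carrier[OF sigma_image_carrier mspan_add(2)] by auto
  then show ?case using mspan_add V2 by (simp add: right_slice_add msubspace_def)
next
  case (mspan_smult Q a)
  have "Q \<in> carrier_mat (d*l) (d*l)" using mspan_carrier[OF sigma_image_carrier mspan_smult(1)] .
  then show ?case using mspan_smult V2 by (simp add: right_slice_smult msubspace_def)
qed

lemma cinner_vec_of_mat_self: "cinner (vec_of_mat d l x) (vec_of_mat d l x) = (\<Sum>s<d*l. cnj (vec_of_mat d l x $ s) * vec_of_mat d l x $ s)"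
  by (simp add: cinner_def)

text \<open>\<sigma>(y^*, x^*) = \<sigma>(x, y)^* lies in W; slicing it against vec x (resp. against the conjugate
  of vec y^*) isolates a nonzero multiple of y^* (resp. x^*).\<close>

lemma sigma_factors_adj_mem:
  assumes V1: "msubspace d l V1" and V2: "msubspace l d V2"
    and W: "W = mspan (d*l) (d*l) {sigma d l x y | x y. x \<in> V1 \<and> y \<in> V2}"
    and adjW: "\<forall>Q\<in>W. adj Q \<in> W"
    and x: "x \<in> V1" "x \<noteq> 0\<^sub>m d l" and y: "y \<in> V2" "y \<noteq> 0\<^sub>m l d"
  shows "adj x \<in> V2" "adj y \<in> V1"
proof -
  let ?N = "d * l"
  have V1c: "V1 \<subseteq> carrier_mat d l" and V2c: "V2 \<subseteq> carrier_mat l d"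
    using V1 V2 by (auto simp: msubspace_def)
  have xc: "x \<in> carrier_mat d l" and yc: "y \<in> carrier_mat l d" using x y V1c V2c by auto
  have ayc: "adj y \<in> carrier_mat d l" and axc: "adj x \<in> carrier_mat l d" using xc yc by simp_all
  have "adj y \<noteq> 0\<^sub>m d l" using y(2) by (metis adj_adj adj_zero)
  then have vy0: "vec_of_mat d l (adj y) \<noteq> 0\<^sub>v ?N" using vec_of_mat_eq_zero[OF ayc] by auto
  have vx0: "vec_of_mat d l x \<noteq> 0\<^sub>v ?N" using vec_of_mat_eq_zero[OF xc] x(2) by auto
  have "sigma d l x y \<in> W" unfolding W using x y by (auto intro: mspan_base)
  then have "sigma d l (adj y) (adj x) \<in> mspan ?N ?N {sigma d l x y | x y. x \<in> V1 \<and> y \<in> V2}"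
    using adjW adj_sigma[OF xc yc] W by metis
  note sW = this
  define c where "c = cinner (vec_of_mat d l x) (vec_of_mat d l x)"
  have c0: "c \<noteq> 0" unfolding c_def by (rule cinner_self_neq_zero[OF vec_of_mat_carrier vx0])
  have "left_slice d l (vec_of_mat d l x) (sigma d l (adj y) (adj x))
      = (\<Sum>s<?N. adj x $$ (s mod l, s div l) * vec_of_mat d l x $ s) \<cdot>\<^sub>m adj y"
    by (rule left_slice_sigma[OF ayc axc])
  also have "(\<Sum>s<?N. adj x $$ (s mod l, s div l) * vec_of_mat d l x $ s) = c"
    unfolding c_def cinner_vec_of_mat_self
    by (rule sum.cong[OF refl]) (use xc in \<open>auto simp: vec_of_mat_index less_mult_imp_div_less index_mod_less\<close>)
  finally have "c \<cdot>\<^sub>m adj y \<in> V1" using left_slice_mspan[OF V1 V2c sW] by metis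
  then have "(1 / c) \<cdot>\<^sub>m (c \<cdot>\<^sub>m adj y) \<in> V1" using V1 by (simp add: msubspace_def)
  then show "adj y \<in> V1" using smult_inverse_cancel_mat[OF c0] by simp
  define z where "z = vec ?N (\<lambda>r. cnj (vec_of_mat d l (adj y) $ r))"
  define c' where "c' = cinner (vec_of_mat d l (adj y)) (vec_of_mat d l (adj y))"
  have c'0: "c' \<noteq> 0" unfolding c'_def by (rule cinner_self_neq_zero[OF vec_of_mat_carrier vy0])
  have "right_slice d l z (sigma d l (adj y) (adj x))
      = (\<Sum>r<?N. z $ r * adj y $$ (r div l, r mod l)) \<cdot>\<^sub>m adj x"
    by (rule right_slice_sigma[OF ayc axc])
  also have "(\<Sum>r<?N. z $ r * adj y $$ (r div l, r mod l)) = c'"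
    unfolding c'_def cinner_vec_of_mat_self
    by (rule sum.cong[OF refl]) (auto simp: z_def vec_of_mat_index)
  finally have "c' \<cdot>\<^sub>m adj x \<in> V2" using right_slice_mspan[OF V1c V2 sW] by metis
  then have "(1 / c') \<cdot>\<^sub>m (c' \<cdot>\<^sub>m adj x) \<in> V2" using V2 by (simp add: msubspace_def)
  then show "adj x \<in> V2" using smult_inverse_cancel_mat[OF c'0] by simp
qed

lemma vsubspace_adj_compatible:
  assumes V1: "msubspace d l V1" and V2: "msubspace l d V2"
  shows "vsubspace (d * l) (vec_of_mat d l ` {x \<in> V1. adj x \<in> V2})"
  unfolding vsubspace_def
proof (intro conjI ballI allI)
  let ?X = "{x \<in> V1. adj x \<in> V2}" and ?U = "vec_of_mat d l ` {x \<in> V1. adj x \<in> V2}"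
  have V1c: "\<And>x. x \<in> V1 \<Longrightarrow> x \<in> carrier_mat d l" using V1 by (auto simp: msubspace_def)
  show "?U \<subseteq> carrier_vec (d * l)" by auto
  have "0\<^sub>m d l \<in> ?X" using V1 V2 by (simp add: msubspace_def)
  then show "0\<^sub>v (d * l) \<in> ?U" using vec_of_mat_zero[of d l] by force
next
  fix u w assume "u \<in> vec_of_mat d l ` {x \<in> V1. adj x \<in> V2}" "w \<in> vec_of_mat d l ` {x \<in> V1. adj x \<in> V2}"
  then obtain x x' where x: "x \<in> V1" "adj x \<in> V2" "u = vec_of_mat d l x"
    and x': "x' \<in> V1" "adj x' \<in> V2" "w = vec_of_mat d l x'" by auto
  have xc: "x \<in> carrier_mat d l" "x' \<in> carrier_mat d l" using x x' V1 by (auto simp: msubspace_def)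
  have "x + x' \<in> V1" "adj (x + x') \<in> V2"
    using x x' V1 V2 adj_add[OF xc] by (simp_all add: msubspace_def)
  moreover have "u + w = vec_of_mat d l (x + x')" using vec_of_mat_add[OF xc] x x' by simp
  ultimately show "u + w \<in> vec_of_mat d l ` {x \<in> V1. adj x \<in> V2}" by blast
next
  fix u and a :: complex assume "u \<in> vec_of_mat d l ` {x \<in> V1. adj x \<in> V2}"
  then obtain x where x: "x \<in> V1" "adj x \<in> V2" "u = vec_of_mat d l x" by auto
  have xc: "x \<in> carrier_mat d l" using x V1 by (auto simp: msubspace_def)
  have "a \<cdot>\<^sub>m x \<in> V1" "adj (a \<cdot>\<^sub>m x) \<in> V2"
    using x V1 V2 by (simp_all add: msubspace_def adj_smult)
  moreover have "a \<cdot>\<^sub>v u = vec_of_mat d l (a \<cdot>\<^sub>m x)" using vec_of_mat_smult[OF xc] x by simp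
  ultimately show "a \<cdot>\<^sub>v u \<in> vec_of_mat d l ` {x \<in> V1. adj x \<in> V2}" by blast
qed

lemma outer_prod_vec_of_mat:
  assumes "x \<in> carrier_mat d l" "x' \<in> carrier_mat d l"
  shows "outer_prod (d * l) (vec_of_mat d l x) (vec_of_mat d l x') = sigma d l x (adj x')"
  using sigma_eq_outer_prod[OF assms(1) adj_carrier[OF assms(2)]] by simp

lemma sigma_fixed_by_proj:
  assumes V1: "msubspace d l V1" and V2: "msubspace l d V2"
    and W: "W = mspan (d*l) (d*l) {sigma d l x y | x y. x \<in> V1 \<and> y \<in> V2}"
    and adjW: "\<forall>Q\<in>W. adj Q \<in> W"
    and Pc: "P \<in> carrier_mat (d*l) (d*l)" and Ph: "adj P = P"
    and Pfix: "\<And>x. x \<in> V1 \<Longrightarrow> adj x \<in> V2 \<Longrightarrow> P *\<^sub>v vec_of_mat d l x = vec_of_mat d l x"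
    and x: "x \<in> V1" and y: "y \<in> V2"
  shows "P * sigma d l x y * P = sigma d l x y"
proof (cases "x = 0\<^sub>m d l \<or> y = 0\<^sub>m l d")
  case True
  then show ?thesis using Pc by (auto simp: sigma_zero_left sigma_zero_right)
next
  case False
  note adj_mem = sigma_factors_adj_mem[OF V1 V2 W adjW x _ y]
  have xc: "x \<in> carrier_mat d l" and yc: "y \<in> carrier_mat l d"
    using x y V1 V2 by (auto simp: msubspace_def)
  show ?thesis
    unfolding sigma_eq_outer_prod[OF xc yc]
    by (rule outer_prod_sandwich[OF Pc Ph vec_of_mat_carrier vec_of_mat_carrier])
      (use Pfix x y adj_mem False in auto)
qed

lemma decomposable_adj_closed_eq_corner:
  assumes V1: "msubspace d l V1" and V2: "msubspace l d V2"
    and W: "W = mspan (d*l) (d*l) {sigma d l x y | x y. x \<in> V1 \<and> y \<in> V2}"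
    and adjW: "\<forall>Q\<in>W. adj Q \<in> W"
  shows "\<exists>P. P \<in> carrier_mat (d*l) (d*l) \<and> adj P = P \<and> P * P = P \<and>
           W = {Q \<in> carrier_mat (d*l) (d*l). P * Q * P = Q}"
proof -
  let ?N = "d * l"
  define U where "U = vec_of_mat d l ` {x \<in> V1. adj x \<in> V2}"
  have vsU: "vsubspace ?N U" unfolding U_def by (rule vsubspace_adj_compatible[OF V1 V2])
  obtain es where g: "orth_family ?N U es"
    and onb: "\<forall>u\<in>U. \<forall>t<?N. u $ t = (\<Sum>j<length es. fourier_coef es u j * es ! j $ t)"
    using orth_basis_exists[OF vsU] by blast
  define P where "P = orth_proj ?N es"
  have Pc: "P \<in> carrier_mat ?N ?N" by (simp add: P_def)
  have Ph: "adj P = P" by (simp add: P_def orth_proj_adj)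
  have Pi: "P * P = P" unfolding P_def by (rule orth_proj_idem[OF vsU g onb])
  have Pfix: "P *\<^sub>v vec_of_mat d l x = vec_of_mat d l x" if "x \<in> V1" "adj x \<in> V2" for x
    unfolding P_def by (rule orth_proj_fix[OF vsU g onb]) (use that in \<open>simp add: U_def\<close>)
  let ?R = "{Q \<in> carrier_mat ?N ?N. P * Q * P = Q}"
  have "W \<subseteq> ?R"
    unfolding W using sigma_fixed_by_proj[OF V1 V2 W adjW Pc Ph Pfix]
    by (intro mspan_least[OF msubspace_sandwich_fixed[OF Pc]]) auto
  moreover have "?R \<subseteq> W"
  proof
    fix Q assume "Q \<in> ?R"
    then have Qc: "Q \<in> carrier_mat ?N ?N" and PQP: "orth_proj ?N es * Q * orth_proj ?N es = Q"
      by (auto simp: P_def)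
    have "{outer_prod ?N u w | u w. u \<in> U \<and> w \<in> U} \<subseteq> {sigma d l x y | x y. x \<in> V1 \<and> y \<in> V2}"
    proof
      fix A assume "A \<in> {outer_prod ?N u w | u w. u \<in> U \<and> w \<in> U}"
      then obtain x x' where x: "x \<in> V1" "adj x' \<in> V2" "x' \<in> V1"
        and A: "A = outer_prod ?N (vec_of_mat d l x) (vec_of_mat d l x')"
        by (auto simp: U_def)
      have "A = sigma d l x (adj x')"
        unfolding A using x V1 by (intro outer_prod_vec_of_mat) (auto simp: msubspace_def)
      then show "A \<in> {sigma d l x y | x y. x \<in> V1 \<and> y \<in> V2}" using x by blast
    qed
    then have "mspan ?N ?N {outer_prod ?N u w | u w. u \<in> U \<and> w \<in> U} \<subseteq> W"
      unfolding W by (intro mspan_mono) auto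
    then show "Q \<in> W" using sandwich_fixed_in_span_outer[OF vsU g Qc PQP] by blast
  qed
  ultimately show ?thesis using Pc Ph Pi by blast
qed

section \<open>Central projections\<close>

definition diag_ind :: "nat \<Rightarrow> (nat \<Rightarrow> bool) \<Rightarrow> cmat" where
  "diag_ind n f = mat n n (\<lambda>(i,j). if i = j \<and> f i then 1 else 0)"

lemma diag_ind_carrier[simp]: "diag_ind n f \<in> carrier_mat n n" by (simp add: diag_ind_def)
lemma dim_diag_ind[simp]: "dim_row (diag_ind n f) = n" "dim_col (diag_ind n f) = n" by (simp_all add: diag_ind_def)

lemma diag_ind_mult_left: assumes Y: "Y \<in> carrier_mat n c"
  shows "diag_ind n f * Y = mat n c (\<lambda>(i,j). if f i then Y $$ (i,j) else 0)"
proof (rule eq_matI)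
  fix i j assume "i < dim_row (mat n c (\<lambda>(i,j). if f i then Y $$ (i,j) else 0))" "j < dim_col (mat n c (\<lambda>(i,j). if f i then Y $$ (i,j) else 0))"
  then have i: "i < n" and j: "j < c" by auto
  have "(diag_ind n f * Y) $$ (i,j) = (\<Sum>t<n. (if i = t \<and> f i then 1 else 0) * Y $$ (t,j))"
    using Y i j by (simp add: scalar_prod_def atLeast0LessThan diag_ind_def)
  also have "\<dots> = (\<Sum>t<n. if t = i then (if f i then Y $$ (i,j) else 0) else 0)"
    by (rule sum.cong[OF refl]) auto
  also have "\<dots> = (if f i then Y $$ (i,j) else 0)" using i by simp
  finally show "(diag_ind n f * Y) $$ (i,j) = mat n c (\<lambda>(i,j). if f i then Y $$ (i,j) else 0) $$ (i,j)"
    using i j by simp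
qed (use Y in auto)

lemma diag_ind_mult_right: assumes Y: "Y \<in> carrier_mat r n"
  shows "Y * diag_ind n f = mat r n (\<lambda>(i,j). if f j then Y $$ (i,j) else 0)"
proof (rule eq_matI)
  fix i j assume "i < dim_row (mat r n (\<lambda>(i,j). if f j then Y $$ (i,j) else 0))" "j < dim_col (mat r n (\<lambda>(i,j). if f j then Y $$ (i,j) else 0))"
  then have i: "i < r" and j: "j < n" by auto
  have "(Y * diag_ind n f) $$ (i,j) = (\<Sum>t<n. Y $$ (i,t) * (if t = j \<and> f t then 1 else 0))"
    using Y i j by (simp add: scalar_prod_def atLeast0LessThan diag_ind_def)
  also have "\<dots> = (\<Sum>t<n. if t = j then (if f j then Y $$ (i,j) else 0) else 0)"
    by (rule sum.cong[OF refl]) auto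
  also have "\<dots> = (if f j then Y $$ (i,j) else 0)" using j by simp
  finally show "(Y * diag_ind n f) $$ (i,j) = mat r n (\<lambda>(i,j). if f j then Y $$ (i,j) else 0) $$ (i,j)"
    using i j by simp
qed (use Y in auto)

lemma diag_ind_comm: assumes Y: "Y \<in> carrier_mat n n"
  and z: "\<And>i j. i < n \<Longrightarrow> j < n \<Longrightarrow> f i \<noteq> f j \<Longrightarrow> Y $$ (i,j) = 0"
  shows "diag_ind n f * Y = Y * diag_ind n f"
  unfolding diag_ind_mult_left[OF Y] diag_ind_mult_right[OF Y]
  by (rule eq_matI) (use z in auto)

lemma diag_ind_blk_center: "diag_ind (tdim ms) (\<lambda>p. blk ms p = b) \<in> center (tdim ms) (Nop ms)"
proof -
  let ?k = "tdim ms"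
  let ?Z = "diag_ind ?k (\<lambda>p. blk ms p = b)"
  have "?Z \<in> blockalg ms" unfolding blockalg_def by (auto simp: diag_ind_def)
  moreover have "transpose_mat ?Z = ?Z" by (rule eq_matI) (auto simp: diag_ind_def)
  ultimately have ZN: "?Z \<in> Nop ms" unfolding Nop_def by (metis image_eqI)
  have "?Z \<in> commutant ?k (Nop ms)"
    unfolding commutant_def
  proof (intro CollectI conjI ballI)
    show "?Z \<in> carrier_mat ?k ?k" by simp
    fix Y assume Y: "Y \<in> Nop ms"
    show "?Z * Y = Y * ?Z"
      by (rule diag_ind_comm[OF Nop_carrier[OF Y]]) (use Nop_offblock_zero[OF Y] in auto)
  qed
  then show ?thesis using ZN by (simp add: center_def)
qed

lemma diag_ind_blk_commutant: "diag_ind (tdim ns) (\<lambda>i. blk ns i = a) \<in> commutant (tdim ns) (blockalg ns)"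
  unfolding commutant_def
proof (intro CollectI conjI ballI)
  show "diag_ind (tdim ns) (\<lambda>i. blk ns i = a) \<in> carrier_mat (tdim ns) (tdim ns)" by simp
  fix X assume X: "X \<in> blockalg ns"
  have Xc: "X \<in> carrier_mat (tdim ns) (tdim ns)" using X by (simp add: blockalg_def)
  show "diag_ind (tdim ns) (\<lambda>i. blk ns i = a) * X = X * diag_ind (tdim ns) (\<lambda>i. blk ns i = a)"
    by (rule diag_ind_comm[OF Xc]) (use X in \<open>auto simp: blockalg_def\<close>)
qed

lemma one_eq_diag_ind: "1\<^sub>m n = diag_ind n (\<lambda>_. True)"
  by (rule eq_matI) (auto simp: diag_ind_def)

lemma kron_diag_ind: "kron (diag_ind d f) (diag_ind k g) = diag_ind (d * k) (\<lambda>R. f (R div k) \<and> g (R mod k))"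
proof (rule eq_matI)
  fix R S assume "R < dim_row (diag_ind (d * k) (\<lambda>R. f (R div k) \<and> g (R mod k)))" "S < dim_col (diag_ind (d * k) (\<lambda>R. f (R div k) \<and> g (R mod k)))"
  then have R: "R < d * k" and S: "S < d * k" by auto
  have "R = S \<longleftrightarrow> R div k = S div k \<and> R mod k = S mod k" by (metis div_mult_mod_eq)
  then show "kron (diag_ind d f) (diag_ind k g) $$ (R,S) = diag_ind (d * k) (\<lambda>R. f (R div k) \<and> g (R mod k)) $$ (R,S)"
    using R S less_mult_imp_div_less[OF R] less_mult_imp_div_less[OF S] index_mod_less[OF R] index_mod_less[OF S] by (auto simp: kron_index diag_ind_def)
qed auto

section \<open>The relation V is a corner\<close>

lemma compress_carrier[simp]: "compress ns ms b v \<in> carrier_mat (tdim ns * ms ! b) (tdim ns * ms ! b)"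
  by (simp add: compress_def Let_def)

lemma dim_compress[simp]: "dim_row (compress ns ms b v) = tdim ns * ms ! b" "dim_col (compress ns ms b v) = tdim ns * ms ! b"
  by (simp_all add: compress_def Let_def)

lemma compress_index: assumes "r < tdim ns * ms ! b" "s < tdim ns * ms ! b"
  shows "compress ns ms b v $$ (r,s) = v $$ (block_index ms b r, block_index ms b s)"
  using assms by (simp add: compress_def Let_def block_index_def add.assoc)

lemma right_blockdiag_index_compress: assumes X: "right_blockdiag ms (tdim ns) (tdim ns) X" and R: "R < tdim ns * tdim ms" and S: "S < tdim ns * tdim ms"
  and bS: "blk ms (S mod tdim ms) = blk ms (R mod tdim ms)"
  shows "X $$ (R,S) = compress ns ms (blk ms (R mod tdim ms)) X $$ (local_index ms R, local_index ms S)"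
proof -
  let ?b = "blk ms (R mod tdim ms)"
  have k: "0 < tdim ms" using R by (cases "tdim ms") auto
  have "?b < length ms" using blk_bounds(1)[of "R mod tdim ms" ms] k by simp
  note lR = local_index_props[OF R] and lS = local_index_props[OF S]
  show ?thesis using compress_index[OF lR(1) lS(1)[unfolded bS]] lR(2) lS(2)[unfolded bS] by simp
qed

lemma right_blockdiag_eq_by_compress: assumes X: "right_blockdiag ms (tdim ns) (tdim ns) X" and Y: "right_blockdiag ms (tdim ns) (tdim ns) Y"
  and c: "\<And>b. b < length ms \<Longrightarrow> compress ns ms b X = compress ns ms b Y"
  shows "X = Y"
proof (rule eq_matI)
  let ?d = "tdim ns" and ?k = "tdim ms"
  have Xc: "X \<in> carrier_mat (?d * ?k) (?d * ?k)" and Yc: "Y \<in> carrier_mat (?d * ?k) (?d * ?k)"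
    using X Y by (auto simp: right_blockdiag_def)
  fix R S assume "R < dim_row Y" "S < dim_col Y"
  then have R: "R < ?d * ?k" and S: "S < ?d * ?k" using Yc by auto
  show "X $$ (R,S) = Y $$ (R,S)"
  proof (cases "blk ms (S mod ?k) = blk ms (R mod ?k)")
    case True
    have k: "0 < ?k" using R by (cases ?k) auto
    have b: "blk ms (R mod ?k) < length ms" using blk_bounds(1)[of "R mod ?k" ms] k by simp
    show ?thesis using right_blockdiag_index_compress[OF X R S True] right_blockdiag_index_compress[OF Y R S True] c[OF b] by simp
  next
    case False
    then show ?thesis using X Y R S by (simp add: right_blockdiag_def)
  qed
qed (use X Y in \<open>auto simp: right_blockdiag_def\<close>)

lemma compress_mult: assumes X: "right_blockdiag ms (tdim ns) (tdim ns) X" and Y: "right_blockdiag ms (tdim ns) (tdim ns) Y" and b: "b < length ms"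
  shows "compress ns ms b (X * Y) = compress ns ms b X * compress ns ms b Y"
proof (rule eq_matI)
  let ?d = "tdim ns" and ?k = "tdim ms" and ?l = "ms ! b"
  have Xc: "X \<in> carrier_mat (?d * ?k) (?d * ?k)" and Yc: "Y \<in> carrier_mat (?d * ?k) (?d * ?k)"
    using X Y by (auto simp: right_blockdiag_def)
  fix r s assume "r < dim_row (compress ns ms b X * compress ns ms b Y)" "s < dim_col (compress ns ms b X * compress ns ms b Y)"
  then have r: "r < ?d * ?l" and s: "s < ?d * ?l" by auto
  note cr = block_index_props[OF b r] and cs = block_index_props[OF b s]
  have "compress ns ms b (X * Y) $$ (r,s) = (\<Sum>T<?d * ?k. X $$ (block_index ms b r, T) * Y $$ (T, block_index ms b s))"
    using r s cr cs Xc Yc by (simp add: compress_index scalar_prod_def atLeast0LessThan)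
  also have "\<dots> = (\<Sum>u<?d * ?l. X $$ (block_index ms b r, block_index ms b u) * Y $$ (block_index ms b u, block_index ms b s))"
  proof (rule sum_restrict_block[OF b])
    fix T assume T: "T < ?d * ?k" and bT: "blk ms (T mod ?k) \<noteq> b"
    have "X $$ (block_index ms b r, T) = 0" using X T bT cr by (simp add: right_blockdiag_def)
    then show "X $$ (block_index ms b r, T) * Y $$ (T, block_index ms b s) = 0" by simp
  qed
  also have "\<dots> = (compress ns ms b X * compress ns ms b Y) $$ (r,s)"
    using r s by (simp add: compress_index scalar_prod_def atLeast0LessThan)
  finally show "compress ns ms b (X * Y) $$ (r,s) = (compress ns ms b X * compress ns ms b Y) $$ (r,s)" .
qed auto

lemma compress_adj: assumes X: "X \<in> carrier_mat (tdim ns * tdim ms) (tdim ns * tdim ms)" and b: "b < length ms"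
  shows "compress ns ms b (adj X) = adj (compress ns ms b X)"
proof (rule eq_matI)
  fix r s assume "r < dim_row (adj (compress ns ms b X))" "s < dim_col (adj (compress ns ms b X))"
  then have r: "r < tdim ns * ms ! b" and s: "s < tdim ns * ms ! b" by auto
  show "compress ns ms b (adj X) $$ (r,s) = adj (compress ns ms b X) $$ (r,s)"
    using r s block_index_props[OF b r] block_index_props[OF b s] X by (simp add: compress_index)
qed auto

lemma qmrD: assumes "qmr ns ms V"
  shows "msubspace (tdim ns * tdim ms) (tdim ns * tdim ms) V"
    "\<And>v. v \<in> V \<Longrightarrow> right_blockdiag ms (tdim ns) (tdim ns) v"
    "\<And>A v. A \<in> commutant (tdim ns) (blockalg ns) \<Longrightarrow> v \<in> V \<Longrightarrow> kron A (1\<^sub>m (tdim ms)) * v \<in> V"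
    "\<And>A v. A \<in> commutant (tdim ns) (blockalg ns) \<Longrightarrow> v \<in> V \<Longrightarrow> v * kron A (1\<^sub>m (tdim ms)) \<in> V"
    "\<And>Z v. Z \<in> center (tdim ms) (Nop ms) \<Longrightarrow> v \<in> V \<Longrightarrow> kron (1\<^sub>m (tdim ns)) Z * v \<in> V"
  using assms unfolding qmr_def Let_def tensN_eq_right_blockdiag by auto

lemma compress_qmr_eq_corner:
  assumes q: "qmr ns ms V" and sy: "symmetric_qmr V" and dec: "decomposable ns ms V"
    and b: "b < length ms"
  shows "\<exists>P. P \<in> carrier_mat (tdim ns * ms ! b) (tdim ns * ms ! b) \<and> adj P = P \<and> P * P = P \<and>
           compress ns ms b ` V = {Q \<in> carrier_mat (tdim ns * ms ! b) (tdim ns * ms ! b). P * Q * P = Q}"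
proof -
  let ?d = "tdim ns" and ?W = "compress ns ms b ` V"
  obtain V1 V2 where V1: "msubspace ?d (ms ! b) V1" and V2: "msubspace (ms ! b) ?d V2"
    and W: "?W = mspan (?d * ms ! b) (?d * ms ! b) {sigma ?d (ms ! b) x y | x y. x \<in> V1 \<and> y \<in> V2}"
    using dec b unfolding decomposable_def decomposable_single_def by blast
  have "adj Q \<in> ?W" if "Q \<in> ?W" for Q
  proof -
    obtain v where v: "v \<in> V" and Qv: "Q = compress ns ms b v" using \<open>Q \<in> ?W\<close> by blast
    have "v \<in> carrier_mat (?d * tdim ms) (?d * tdim ms)" using qmrD(2)[OF q v] by (simp add: right_blockdiag_def)
    then have "adj Q = compress ns ms b (adj v)" using compress_adj[OF _ b] Qv by simp
    moreover have "adj v \<in> V" using sy v unfolding symmetric_qmr_def by blast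
    ultimately show "adj Q \<in> ?W" by blast
  qed
  then show ?thesis using decomposable_adj_closed_eq_corner[OF V1 V2 W] by blast
qed

definition glue_blocks :: "nat list \<Rightarrow> nat \<Rightarrow> (nat \<Rightarrow> cmat) \<Rightarrow> cmat" where
  "glue_blocks ms d Pb = mat (d * tdim ms) (d * tdim ms) (\<lambda>(R,S).
     if blk ms (R mod tdim ms) = blk ms (S mod tdim ms)
     then Pb (blk ms (R mod tdim ms)) $$ (local_index ms R, local_index ms S) else 0)"

lemma right_blockdiag_glue_blocks: "right_blockdiag ms d d (glue_blocks ms d Pb)"
  unfolding right_blockdiag_def glue_blocks_def by auto

lemma compress_glue_blocks:
  assumes b: "b < length ms" and Pb: "Pb b \<in> carrier_mat (tdim ns * ms ! b) (tdim ns * ms ! b)"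
  shows "compress ns ms b (glue_blocks ms (tdim ns) Pb) = Pb b"
proof (rule eq_matI)
  fix r s assume "r < dim_row (Pb b)" "s < dim_col (Pb b)"
  then have r: "r < tdim ns * ms ! b" and s: "s < tdim ns * ms ! b" using Pb by auto
  show "compress ns ms b (glue_blocks ms (tdim ns) Pb) $$ (r,s) = Pb b $$ (r,s)"
    using r s block_index_props[OF b r] block_index_props[OF b s]
    by (simp add: compress_index glue_blocks_def)
qed (use Pb in auto)

lemma glue_blocks_proj:
  assumes Pb: "\<And>b. b < length ms \<Longrightarrow> Pb b \<in> carrier_mat (tdim ns * ms ! b) (tdim ns * ms ! b) \<and>
      adj (Pb b) = Pb b \<and> Pb b * Pb b = Pb b"
  shows "adj (glue_blocks ms (tdim ns) Pb) = glue_blocks ms (tdim ns) Pb"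
    and "glue_blocks ms (tdim ns) Pb * glue_blocks ms (tdim ns) Pb = glue_blocks ms (tdim ns) Pb"
proof -
  let ?P = "glue_blocks ms (tdim ns) Pb"
  have Pbd: "right_blockdiag ms (tdim ns) (tdim ns) ?P" by (rule right_blockdiag_glue_blocks)
  have cP: "compress ns ms b ?P = Pb b" if b: "b < length ms" for b
    using compress_glue_blocks[OF b] Pb[OF b] by blast
  show "adj ?P = ?P"
  proof (rule right_blockdiag_eq_by_compress[OF right_blockdiag_adj[OF Pbd] Pbd])
    fix b assume b: "b < length ms"
    show "compress ns ms b (adj ?P) = compress ns ms b ?P"
      using compress_adj[OF right_blockdiag_carrier[OF Pbd] b] cP[OF b] Pb[OF b] by simp
  qed
  show "?P * ?P = ?P"
  proof (rule right_blockdiag_eq_by_compress[OF right_blockdiag_mult[OF Pbd Pbd] Pbd])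
    fix b assume b: "b < length ms"
    show "compress ns ms b (?P * ?P) = compress ns ms b ?P"
      using compress_mult[OF Pbd Pbd b] cP[OF b] Pb[OF b] by simp
  qed
qed

lemma glue_blocks_sandwich_eq_iff:
  assumes Pb: "\<And>b. b < length ms \<Longrightarrow> Pb b \<in> carrier_mat (tdim ns * ms ! b) (tdim ns * ms ! b)"
    and Xbd: "right_blockdiag ms (tdim ns) (tdim ns) X"
  shows "glue_blocks ms (tdim ns) Pb * X * glue_blocks ms (tdim ns) Pb = X \<longleftrightarrow>
         (\<forall>b<length ms. Pb b * compress ns ms b X * Pb b = compress ns ms b X)"
proof -
  let ?P = "glue_blocks ms (tdim ns) Pb"
  have Pbd: "right_blockdiag ms (tdim ns) (tdim ns) ?P" by (rule right_blockdiag_glue_blocks)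
  have PXPbd: "right_blockdiag ms (tdim ns) (tdim ns) (?P * X * ?P)"
    by (rule right_blockdiag_mult[OF right_blockdiag_mult[OF Pbd Xbd] Pbd])
  have cPXP: "compress ns ms b (?P * X * ?P) = Pb b * compress ns ms b X * Pb b"
    if b: "b < length ms" for b
    using compress_mult[OF right_blockdiag_mult[OF Pbd Xbd] Pbd b] compress_mult[OF Pbd Xbd b]
      compress_glue_blocks[of b ms Pb ns, OF b Pb[OF b]]
    by simp
  show ?thesis
  proof
    assume "?P * X * ?P = X"
    then show "\<forall>b<length ms. Pb b * compress ns ms b X * Pb b = compress ns ms b X"
      using cPXP by simp
  next
    assume "\<forall>b<length ms. Pb b * compress ns ms b X * Pb b = compress ns ms b X"
    then show "?P * X * ?P = X"
      by (intro right_blockdiag_eq_by_compress[OF PXPbd Xbd]) (simp add: cPXP)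
  qed
qed

text \<open>A block-diagonal X whose compressions all come from V lies in V: cut each representative
  down to its own block with the central projection of N^op and add up.\<close>

lemma qmr_mem_if_compress_mem:
  assumes q: "qmr ns ms V" and Xbd: "right_blockdiag ms (tdim ns) (tdim ns) X"
    and comp: "\<And>b. b < length ms \<Longrightarrow> compress ns ms b X \<in> compress ns ms b ` V"
  shows "X \<in> V"
proof -
  let ?d = "tdim ns" and ?k = "tdim ms"
  note Q = qmrD[OF q]
  have "\<forall>b. \<exists>v. b < length ms \<longrightarrow> v \<in> V \<and> compress ns ms b v = compress ns ms b X"
    using comp by (metis imageE)
  then obtain vv where vv: "\<And>b. b < length ms \<Longrightarrow> vv b \<in> V \<and> compress ns ms b (vv b) = compress ns ms b X"
    by (metis choice)
  have vbd: "right_blockdiag ms ?d ?d (vv b)" if "b < length ms" for b using Q(2) vv[OF that] by blast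
  define g where "g b = kron (1\<^sub>m ?d) (diag_ind ?k (\<lambda>p. blk ms p = b)) * vv b" for b
  have gV: "g b \<in> V" if b: "b < length ms" for b
    unfolding g_def using Q(5)[OF diag_ind_blk_center] vv[OF b] by blast
  have gidx: "g b $$ (R,S) = (if blk ms (R mod ?k) = b then vv b $$ (R,S) else 0)"
    if b: "b < length ms" and R: "R < ?d * ?k" and S: "S < ?d * ?k" for b R S
  proof -
    have "kron (1\<^sub>m ?d) (diag_ind ?k (\<lambda>p. blk ms p = b)) = diag_ind (?d * ?k) (\<lambda>R. blk ms (R mod ?k) = b)"
      unfolding one_eq_diag_ind kron_diag_ind by simp
    then show ?thesis
      unfolding g_def using diag_ind_mult_left[OF right_blockdiag_carrier[OF vbd[OF b]]] R S by simp
  qed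
  have "msum (?d * ?k) (?d * ?k) g {..<length ms} = X"
  proof (rule eq_matI)
    fix R S assume "R < dim_row X" "S < dim_col X"
    then have R: "R < ?d * ?k" and S: "S < ?d * ?k" using Xbd by (auto simp: right_blockdiag_def)
    let ?b = "blk ms (R mod ?k)"
    have "0 < ?k" using R by (cases ?k) auto
    then have b: "?b < length ms" using blk_bounds(1)[of "R mod ?k" ms] by simp
    have "msum (?d * ?k) (?d * ?k) g {..<length ms} $$ (R,S) = (\<Sum>b<length ms. g b $$ (R,S))"
      using R S by (simp add: index_msum)
    also have "\<dots> = (\<Sum>b<length ms. if b = ?b then vv ?b $$ (R,S) else 0)"
      by (rule sum.cong[OF refl]) (use gidx R S in auto)
    also have "\<dots> = vv ?b $$ (R,S)" using b by simp
    also have "\<dots> = X $$ (R,S)"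
    proof (cases "blk ms (S mod ?k) = ?b")
      case True
      show ?thesis using right_blockdiag_index_compress[OF vbd[OF b] R S True]
          right_blockdiag_index_compress[OF Xbd R S True] vv[OF b] by simp
    next
      case False
      show ?thesis using vbd[OF b] Xbd R S False by (simp add: right_blockdiag_def)
    qed
    finally show "msum (?d * ?k) (?d * ?k) g {..<length ms} $$ (R,S) = X $$ (R,S)" .
  qed (use Xbd in \<open>auto simp: right_blockdiag_def\<close>)
  moreover have "msum (?d * ?k) (?d * ?k) g {..<length ms} \<in> V"
    by (rule msum_in_msubspace[OF Q(1)]) (use gV in auto)
  ultimately show ?thesis by simp
qed

lemma qmr_eq_corner:
  assumes q: "qmr ns ms V" and sy: "symmetric_qmr V" and dec: "decomposable ns ms V"
  shows "\<exists>P. right_blockdiag ms (tdim ns) (tdim ns) P \<and> adj P = P \<and> P * P = P \<and>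
            V = corner ms (tdim ns) P"
proof -
  let ?d = "tdim ns"
  let ?prop = "\<lambda>b P. P \<in> carrier_mat (?d * ms ! b) (?d * ms ! b) \<and> adj P = P \<and> P * P = P \<and>
    compress ns ms b ` V = {Q \<in> carrier_mat (?d * ms ! b) (?d * ms ! b). P * Q * P = Q}"
  define Pb where "Pb b = (SOME P. ?prop b P)" for b
  have Pb: "?prop b (Pb b)" if "b < length ms" for b
    unfolding Pb_def by (rule someI_ex[OF compress_qmr_eq_corner[OF q sy dec that]])
  define P where "P = glue_blocks ms ?d Pb"
  have Pbd: "right_blockdiag ms ?d ?d P" unfolding P_def by (rule right_blockdiag_glue_blocks)
  have Padj: "adj P = P" unfolding P_def by (rule glue_blocks_proj(1)) (use Pb in blast)
  have Pidem: "P * P = P" unfolding P_def by (rule glue_blocks_proj(2)) (use Pb in blast)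
  have corner_iff: "X \<in> corner ms ?d P \<longleftrightarrow>
      (\<forall>b<length ms. compress ns ms b X \<in> compress ns ms b ` V)"
    if Xbd: "right_blockdiag ms ?d ?d X" for X
    using glue_blocks_sandwich_eq_iff[of ms Pb ns X] Pb Xbd by (auto simp: corner_def P_def)
  have "V \<subseteq> corner ms ?d P" using corner_iff qmrD(2)[OF q] by blast
  moreover have "corner ms ?d P \<subseteq> V"
    using corner_iff qmr_mem_if_compress_mem[OF q] by (auto simp: corner_def)
  ultimately show ?thesis using Pbd Padj Pidem by blast
qed

section \<open>The Choi map of the corner projection\<close>

lemma corner_proj_offblock_zero:
  assumes q: "qmr ns ms V" and VR: "V = corner ms (tdim ns) P"
    and Pbd: "right_blockdiag ms (tdim ns) (tdim ns) P" and Pi: "P * P = P"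
    and R: "R < tdim ns * tdim ms" and S: "S < tdim ns * tdim ms"
    and ne: "blk ns (R div tdim ms) \<noteq> blk ns (S div tdim ms)"
  shows "P $$ (R,S) = 0"
proof -
  let ?d = "tdim ns" and ?k = "tdim ms"
  let ?a = "blk ns (R div ?k)"
  let ?E = "diag_ind ?d (\<lambda>i. blk ns i = ?a)"
  let ?K = "kron ?E (1\<^sub>m ?k)"
  note Q = qmrD[OF q]
  have Pc: "P \<in> carrier_mat (?d * ?k) (?d * ?k)" using Pbd by (simp add: right_blockdiag_def)
  have Kd: "?K = diag_ind (?d * ?k) (\<lambda>R. blk ns (R div ?k) = ?a \<and> True)"
    unfolding one_eq_diag_ind kron_diag_ind ..
  have Kc: "?K \<in> carrier_mat (?d * ?k) (?d * ?k)" unfolding Kd by simp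
  have PPP: "P * P * P = P" using Pi by simp
  have PV: "P \<in> V" using VR Pbd PPP by (simp add: corner_def)
  have KPV: "?K * P \<in> V" by (rule Q(3)[OF diag_ind_blk_commutant PV])
  have PKV: "P * ?K \<in> V" by (rule Q(4)[OF diag_ind_blk_commutant PV])
  have e1: "P * (?K * P) * P = ?K * P" using KPV VR by (simp add: corner_def)
  have e2: "P * (P * ?K) * P = P * ?K" using PKV VR by (simp add: corner_def)
  have "?K * P = P * (?K * P) * P" using e1 by simp
  also have "P * (?K * P) = P * ?K * P" using assoc_mult_mat[OF Pc Kc Pc] by simp
  also have "P * ?K * P * P = P * ?K * (P * P)" using assoc_mult_mat[OF mult_carrier_mat[OF Pc Kc] Pc Pc] .
  also have "\<dots> = P * ?K * P" unfolding Pi ..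
  finally have 1: "?K * P = P * ?K * P" .
  have "P * ?K = P * (P * ?K) * P" using e2 by simp
  also have "P * (P * ?K) = P * P * ?K" using assoc_mult_mat[OF Pc Pc Kc] by simp
  also have "\<dots> = P * ?K" unfolding Pi ..
  finally have 2: "P * ?K = P * ?K * P" .
  have KP: "?K * P = P * ?K" using 1 2 by simp
  have "(?K * P) $$ (R,S) = P $$ (R,S)"
    unfolding Kd diag_ind_mult_left[OF Pc] using R S by simp
  moreover have "(P * ?K) $$ (R,S) = 0"
    unfolding Kd diag_ind_mult_right[OF Pc] using R S ne by simp
  ultimately show ?thesis using KP by simp
qed

text \<open>The inverse of \<Phi> \<mapsto> C_\<Phi>: the (p,q) entry of \<Phi>(e_ji) is P_(ik+q, jk+p), transposed
  because C_\<Phi> reads \<Phi>(e_ji) in N^op.\<close>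

definition choi_map :: "nat \<Rightarrow> nat \<Rightarrow> cmat \<Rightarrow> cmat \<Rightarrow> cmat" where
  "choi_map d k P X = mat k k (\<lambda>(p,q). \<Sum>i<d. \<Sum>j<d. X $$ (j,i) * P $$ (i*k+q, j*k+p))"

lemma choi_map_carrier[simp]: "choi_map d k P X \<in> carrier_mat k k" by (simp add: choi_map_def)
lemma dim_choi_map[simp]: "dim_row (choi_map d k P X) = k" "dim_col (choi_map d k P X) = k" by (simp_all add: choi_map_def)

lemma choi_map_munit: assumes j: "j < d" and i: "i < d" and p: "p < k" and q: "q < k"
  shows "choi_map d k P (munit d d j i) $$ (p,q) = P $$ (i*k+q, j*k+p)"
proof -
  have "choi_map d k P (munit d d j i) $$ (p,q) = (\<Sum>i'<d. \<Sum>j'<d. (if j' = j \<and> i' = i then 1 else 0) * P $$ (i'*k+q, j'*k+p))"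
    using p q by (simp add: choi_map_def)
  also have "\<dots> = (\<Sum>i'<d. if i' = i then P $$ (i*k+q, j*k+p) else 0)"
  proof (rule sum.cong[OF refl])
    fix i' assume "i' \<in> {..<d}"
    show "(\<Sum>j'<d. (if j' = j \<and> i' = i then 1 else 0) * P $$ (i'*k+q, j'*k+p)) = (if i' = i then P $$ (i*k+q, j*k+p) else 0)"
    proof (cases "i' = i")
      case True
      have "(\<Sum>j'<d. (if j' = j \<and> i' = i then 1 else 0) * P $$ (i'*k+q, j'*k+p)) = (\<Sum>j'<d. if j' = j then P $$ (i*k+q, j*k+p) else 0)"
        by (rule sum.cong[OF refl]) (use True in auto)
      then show ?thesis using j True by simp
    next
      case False
      then show ?thesis by simp
    qed
  qed
  also have "\<dots> = P $$ (i*k+q, j*k+p)" using i by simp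
  finally show ?thesis .
qed

lemma CPhi_choi_map:
  assumes Pc: "P \<in> carrier_mat (tdim ns * tdim ms) (tdim ns * tdim ms)"
    and off: "\<And>R S. R < tdim ns * tdim ms \<Longrightarrow> S < tdim ns * tdim ms \<Longrightarrow>
                blk ns (R div tdim ms) \<noteq> blk ns (S div tdim ms) \<Longrightarrow> P $$ (R,S) = 0"
  shows "CPhi ns ms (choi_map (tdim ns) (tdim ms) P) = P"
proof (rule eq_matI)
  let ?d = "tdim ns" and ?k = "tdim ms"
  let ?SS = "{(i,j). i < ?d \<and> j < ?d \<and> blk ns i = blk ns j}"
  let ?f = "\<lambda>(i,j). kron (munit ?d ?d i j) (transpose_mat (choi_map ?d ?k P (munit ?d ?d j i)))"
  fix R S assume "R < dim_row P" "S < dim_col P"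
  then have R: "R < ?d * ?k" and S: "S < ?d * ?k" using Pc by auto
  have k: "0 < ?k" using R by (cases ?k) auto
  have Rd: "R div ?k < ?d" and Sd: "S div ?k < ?d" using less_mult_imp_div_less[OF R] less_mult_imp_div_less[OF S] .
  have Rm: "R mod ?k < ?k" and Sm: "S mod ?k < ?k" using k by auto
  have finSS: "finite ?SS" by (rule finite_subset[of _ "{..<?d} \<times> {..<?d}"]) auto
  have "CPhi ns ms (choi_map ?d ?k P) $$ (R,S) = (\<Sum>ij\<in>?SS. ?f ij $$ (R,S))"
    unfolding CPhi_def Let_def using R S by (simp add: index_msum)
  also have "\<dots> = (\<Sum>ij\<in>?SS. if ij = (R div ?k, S div ?k) then P $$ (R,S) else 0)"
  proof (rule sum.cong[OF refl])
    fix ij assume "ij \<in> ?SS"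
    then obtain i j where ij: "ij = (i,j)" and i: "i < ?d" and j: "j < ?d" by auto
    have "?f ij $$ (R,S) = munit ?d ?d i j $$ (R div ?k, S div ?k) * choi_map ?d ?k P (munit ?d ?d j i) $$ (S mod ?k, R mod ?k)"
      using ij R S Rm Sm by (simp add: kron_index)
    also have "\<dots> = (if ij = (R div ?k, S div ?k) then P $$ (R,S) else 0)"
    proof (cases "ij = (R div ?k, S div ?k)")
      case True
      then have "i = R div ?k" "j = S div ?k" using ij by auto
      then show ?thesis using True Rd Sd Rm Sm choi_map_munit[OF j i Sm Rm] by (simp add: div_mult_mod_eq)
    next
      case False
      then have "\<not> (R div ?k = i \<and> S div ?k = j)" using ij by auto
      then show ?thesis using False Rd Sd by auto
    qed
    finally show "?f ij $$ (R,S) = (if ij = (R div ?k, S div ?k) then P $$ (R,S) else 0)" .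
  qed
  also have "\<dots> = (if (R div ?k, S div ?k) \<in> ?SS then P $$ (R,S) else 0)"
    using finSS by (simp add: sum.delta')
  also have "\<dots> = P $$ (R,S)" using off[OF R S] Rd Sd by auto
  finally show "CPhi ns ms (choi_map ?d ?k P) $$ (R,S) = P $$ (R,S)" .
qed (use Pc in \<open>auto simp: CPhi_def Let_def\<close>)

definition qform :: "nat \<Rightarrow> cmat \<Rightarrow> complex vec \<Rightarrow> complex" where
  "qform N A w = (\<Sum>r<N. cnj (w $ r) * (\<Sum>c<N. A $$ (r,c) * w $ c))"

lemma qform_eq: assumes A: "A \<in> carrier_mat N N" and w: "w \<in> carrier_vec N"
  shows "conjugate w \<bullet> (A *\<^sub>v w) = qform N A w"
  using A w by (simp add: qform_def scalar_prod_def atLeast0LessThan)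

lemma qform_sum: assumes fin: "finite T"
  and e: "\<And>r c. r < N \<Longrightarrow> c < N \<Longrightarrow> A $$ (r,c) = (\<Sum>t\<in>T. M t $$ (r,c))"
  shows "qform N A w = (\<Sum>t\<in>T. qform N (M t) w)"
proof -
  have "qform N A w = (\<Sum>r<N. cnj (w $ r) * (\<Sum>c<N. (\<Sum>t\<in>T. M t $$ (r,c)) * w $ c))"
    unfolding qform_def by (rule sum.cong[OF refl]) (simp add: e)
  also have "\<dots> = (\<Sum>r<N. \<Sum>t\<in>T. cnj (w $ r) * (\<Sum>c<N. M t $$ (r,c) * w $ c))"
  proof (rule sum.cong[OF refl])
    fix r
    have "(\<Sum>c<N. (\<Sum>t\<in>T. M t $$ (r,c)) * w $ c) = (\<Sum>c<N. \<Sum>t\<in>T. M t $$ (r,c) * w $ c)"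
      by (simp add: sum_distrib_right)
    also have "\<dots> = (\<Sum>t\<in>T. \<Sum>c<N. M t $$ (r,c) * w $ c)" by (rule sum.swap)
    finally show "cnj (w $ r) * (\<Sum>c<N. (\<Sum>t\<in>T. M t $$ (r,c)) * w $ c) = (\<Sum>t\<in>T. cnj (w $ r) * (\<Sum>c<N. M t $$ (r,c) * w $ c))"
      by (simp add: sum_distrib_left)
  qed
  also have "\<dots> = (\<Sum>t\<in>T. \<Sum>r<N. cnj (w $ r) * (\<Sum>c<N. M t $$ (r,c) * w $ c))" by (rule sum.swap)
  finally show ?thesis unfolding qform_def .
qed

lemma sprod_adj_mult_vec: assumes B: "B \<in> carrier_mat a b" and v: "v \<in> carrier_vec a" and w: "w \<in> carrier_vec b"
  shows "conjugate w \<bullet> (adj B *\<^sub>v v) = conjugate (B *\<^sub>v w) \<bullet> v"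
proof -
  have "conjugate w \<bullet> (adj B *\<^sub>v v) = (\<Sum>c<b. cnj (w $ c) * (\<Sum>m<a. cnj (B $$ (m,c)) * v $ m))"
    using B v w by (simp add: scalar_prod_def atLeast0LessThan)
  also have "\<dots> = (\<Sum>c<b. \<Sum>m<a. cnj (w $ c) * cnj (B $$ (m,c)) * v $ m)"
    by (simp add: sum_distrib_left mult.assoc)
  also have "\<dots> = (\<Sum>m<a. \<Sum>c<b. cnj (w $ c) * cnj (B $$ (m,c)) * v $ m)" by (rule sum.swap)
  also have "\<dots> = (\<Sum>m<a. cnj (\<Sum>c<b. B $$ (m,c) * w $ c) * v $ m)"
    by (rule sum.cong[OF refl]) (simp add: sum_distrib_right sum_distrib_left ac_simps)
  also have "\<dots> = conjugate (B *\<^sub>v w) \<bullet> v"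
    using B v w by (simp add: scalar_prod_def atLeast0LessThan)
  finally show ?thesis .
qed

lemma sum_div_fiber: fixes g :: "nat \<Rightarrow> complex" assumes s: "s < n"
  shows "(\<Sum>m<n * d. if m div d = s then g m else 0) = (\<Sum>j<d. g (s * d + j))"
proof -
  have d: "0 < d" if "d \<noteq> 0" using that by simp
  have "(\<Sum>m<n * d. if m div d = s then g m else 0) = (\<Sum>m\<in>(\<lambda>j. s * d + j) ` {..<d}. g m)"
  proof (rule sum.mono_neutral_cong_right)
    show "(\<lambda>j. s * d + j) ` {..<d} \<subseteq> {..<n * d}"
      using index_comb_less[OF s] by (auto simp: mult.commute)
    have img: "m \<in> (\<lambda>j. s * d + j) ` {..<d}" if "m div d = s" "m < n * d" for m
    proof (rule image_eqI[of _ _ "m mod d"])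
      show "m = s * d + m mod d" using that by (metis div_mult_mod_eq)
      show "m mod d \<in> {..<d}" using index_mod_less[of m n d] that by simp
    qed
    show "\<forall>m\<in>{..<n * d} - (\<lambda>j. s * d + j) ` {..<d}. (if m div d = s then g m else 0) = 0"
      using img by auto
    show "\<And>m. m \<in> (\<lambda>j. s * d + j) ` {..<d} \<Longrightarrow> (if m div d = s then g m else 0) = g m" by auto
  qed auto
  also have "\<dots> = (\<Sum>j<d. g (s * d + j))"
    by (subst sum.reindex) (auto simp: inj_on_def)
  finally show ?thesis .
qed

text \<open>kraus_op n d k P t is 1_n \<otimes> V_t, where V_t : C^k \<rightarrow> C^d is read off the t-th column of P.
  Because P = P P^*, the V_t are Kraus operators of the Choi map.\<close>

definition kraus_op :: "nat \<Rightarrow> nat \<Rightarrow> nat \<Rightarrow> cmat \<Rightarrow> nat \<Rightarrow> cmat" where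
  "kraus_op n d k P t = mat (n*d) (n*k) (\<lambda>(m,c). if m div d = c div k then P $$ ((m mod d)*k + c mod k, t) else 0)"

lemma kraus_op_carrier[simp]: "kraus_op n d k P t \<in> carrier_mat (n*d) (n*k)" by (simp add: kraus_op_def)
lemma dim_kraus_op[simp]: "dim_row (kraus_op n d k P t) = n*d" "dim_col (kraus_op n d k P t) = n*k" by (simp_all add: kraus_op_def)

lemma amplify_choi_map_index: assumes r: "r < n*k" and c: "c < n*k"
  shows "amplify d k n (choi_map d k P) Z $$ (r,c) =
    (\<Sum>i<d. \<Sum>j<d. Z $$ ((r div k)*d + j, (c div k)*d + i) * P $$ (i*k + c mod k, j*k + r mod k))"
proof -
  have k: "0 < k" using r by (cases k) auto
  have "amplify d k n (choi_map d k P) Z $$ (r,c) = choi_map d k P (subblock d Z (r div k) (c div k)) $$ (r mod k, c mod k)"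
    using r c by (simp add: amplify_def)
  also have "\<dots> = (\<Sum>i<d. \<Sum>j<d. subblock d Z (r div k) (c div k) $$ (j,i) * P $$ (i*k + c mod k, j*k + r mod k))"
    using k by (simp add: choi_map_def)
  also have "\<dots> = (\<Sum>i<d. \<Sum>j<d. Z $$ ((r div k)*d + j, (c div k)*d + i) * P $$ (i*k + c mod k, j*k + r mod k))"
    by (intro sum.cong refl) (simp add: subblock_def)
  finally show ?thesis .
qed

lemma kraus_sandwich_index: assumes Z: "Z \<in> carrier_mat (n*d) (n*d)" and r: "r < n*k" and c: "c < n*k"
  shows "(adj (kraus_op n d k P t) * Z * kraus_op n d k P t) $$ (r,c) =
    (\<Sum>i<d. \<Sum>j<d. cnj (P $$ (j*k + r mod k, t)) * Z $$ ((r div k)*d + j, (c div k)*d + i) * P $$ (i*k + c mod k, t))"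
proof -
  let ?B = "kraus_op n d k P t"
  let ?X = "adj ?B * Z"
  have rn: "r div k < n" and cn: "c div k < n" using less_mult_imp_div_less[OF r] less_mult_imp_div_less[OF c] .
  have Xc: "?X \<in> carrier_mat (n*k) (n*d)" using mult_carrier_mat[OF adj_carrier[OF kraus_op_carrier] Z] .
  have X: "?X $$ (r,m') = (\<Sum>j<d. cnj (P $$ (j*k + r mod k, t)) * Z $$ ((r div k)*d + j, m'))" if m': "m' < n*d" for m'
  proof -
    have "?X $$ (r,m') = (\<Sum>m<n*d. cnj (?B $$ (m,r)) * Z $$ (m,m'))"
      using Z r m' by (simp add: scalar_prod_def atLeast0LessThan)
    also have "\<dots> = (\<Sum>m<n*d. if m div d = r div k then cnj (P $$ ((m mod d)*k + r mod k, t)) * Z $$ (m,m') else 0)"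
      by (rule sum.cong[OF refl]) (use r in \<open>auto simp: kraus_op_def\<close>)
    also have "\<dots> = (\<Sum>j<d. cnj (P $$ (((r div k)*d + j) mod d * k + r mod k, t)) * Z $$ ((r div k)*d + j, m'))"
      by (rule sum_div_fiber[OF rn])
    also have "\<dots> = (\<Sum>j<d. cnj (P $$ (j*k + r mod k, t)) * Z $$ ((r div k)*d + j, m'))"
      by (rule sum.cong[OF refl]) simp
    finally show ?thesis .
  qed
  have "(?X * ?B) $$ (r,c) = (\<Sum>m'<n*d. row ?X r $ m' * ?B $$ (m',c))"
    using Xc r c by (simp add: scalar_prod_def atLeast0LessThan)
  also have "\<dots> = (\<Sum>m'<n*d. ?X $$ (r,m') * ?B $$ (m',c))"
    by (rule sum.cong[OF refl]) (use carrier_matD[OF Xc] r in simp)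
  also have "\<dots> = (\<Sum>m'<n*d. if m' div d = c div k then ?X $$ (r,m') * P $$ ((m' mod d)*k + c mod k, t) else 0)"
    by (rule sum.cong[OF refl]) (use c in \<open>auto simp: kraus_op_def\<close>)
  also have "\<dots> = (\<Sum>i<d. ?X $$ (r, (c div k)*d + i) * P $$ ((((c div k)*d + i) mod d)*k + c mod k, t))"
    by (rule sum_div_fiber[OF cn])
  also have "\<dots> = (\<Sum>i<d. (\<Sum>j<d. cnj (P $$ (j*k + r mod k, t)) * Z $$ ((r div k)*d + j, (c div k)*d + i)) * P $$ (i*k + c mod k, t))"
  proof (rule sum.cong[OF refl])
    fix i assume "i \<in> {..<d}"
    then have i: "i < d" by simp
    have "(c div k)*d + i < n*d" using index_comb_less[OF cn i] by (simp add: mult.commute)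
    then show "?X $$ (r, (c div k)*d + i) * P $$ ((((c div k)*d + i) mod d)*k + c mod k, t) =
      (\<Sum>j<d. cnj (P $$ (j*k + r mod k, t)) * Z $$ ((r div k)*d + j, (c div k)*d + i)) * P $$ (i*k + c mod k, t)"
      using X i by simp
  qed
  also have "\<dots> = (\<Sum>i<d. \<Sum>j<d. cnj (P $$ (j*k + r mod k, t)) * Z $$ ((r div k)*d + j, (c div k)*d + i) * P $$ (i*k + c mod k, t))"
    by (simp add: sum_distrib_right)
  finally show ?thesis .
qed

lemma proj_index_eq_sum: assumes Pc: "P \<in> carrier_mat N N" and Ph: "adj P = P" and Pi: "P * P = P"
  and a: "a < N" and b: "b < N"
  shows "P $$ (a,b) = (\<Sum>t<N. P $$ (a,t) * cnj (P $$ (b,t)))"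
proof -
  have "P $$ (a,b) = (P * P) $$ (a,b)" using Pi by simp
  also have "\<dots> = (\<Sum>t<N. P $$ (a,t) * P $$ (t,b))" using Pc a b by (simp add: scalar_prod_def atLeast0LessThan)
  also have "\<dots> = (\<Sum>t<N. P $$ (a,t) * cnj (P $$ (b,t)))"
  proof (rule sum.cong[OF refl])
    fix t assume "t \<in> {..<N}"
    then have t: "t < N" by simp
    have "adj P $$ (t,b) = cnj (P $$ (b,t))" using Pc t b by simp
    then show "P $$ (a,t) * P $$ (t,b) = P $$ (a,t) * cnj (P $$ (b,t))" using Ph by simp
  qed
  finally show ?thesis .
qed

lemma amplify_choi_map_eq_sum: assumes Pc: "P \<in> carrier_mat (d*k) (d*k)" and Ph: "adj P = P" and Pi: "P * P = P"
  and Z: "Z \<in> carrier_mat (n*d) (n*d)" and r: "r < n*k" and c: "c < n*k"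
  shows "amplify d k n (choi_map d k P) Z $$ (r,c) = (\<Sum>t<d*k. (adj (kraus_op n d k P t) * Z * kraus_op n d k P t) $$ (r,c))"
proof -
  have k: "0 < k" using r by (cases k) auto
  let ?r = "r mod k" and ?c = "c mod k"
  let ?Z = "\<lambda>i j. Z $$ ((r div k)*d + j, (c div k)*d + i)"
  have rk: "?r < k" and ck: "?c < k" using k by auto
  have "(\<Sum>t<d*k. (adj (kraus_op n d k P t) * Z * kraus_op n d k P t) $$ (r,c)) =
     (\<Sum>t<d*k. \<Sum>i<d. \<Sum>j<d. cnj (P $$ (j*k + ?r, t)) * ?Z i j * P $$ (i*k + ?c, t))"
    by (rule sum.cong[OF refl]) (rule kraus_sandwich_index[OF Z r c])
  also have "\<dots> = (\<Sum>i<d. \<Sum>t<d*k. \<Sum>j<d. cnj (P $$ (j*k + ?r, t)) * ?Z i j * P $$ (i*k + ?c, t))"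
    by (rule sum.swap)
  also have "\<dots> = (\<Sum>i<d. \<Sum>j<d. \<Sum>t<d*k. cnj (P $$ (j*k + ?r, t)) * ?Z i j * P $$ (i*k + ?c, t))"
    by (rule sum.cong[OF refl]) (rule sum.swap)
  also have "\<dots> = (\<Sum>i<d. \<Sum>j<d. ?Z i j * P $$ (i*k + ?c, j*k + ?r))"
  proof (rule sum.cong[OF refl], rule sum.cong[OF refl])
    fix i j assume "i \<in> {..<d}" "j \<in> {..<d}"
    then have i: "i*k + ?c < d*k" and j: "j*k + ?r < d*k" using index_comb_less ck rk by auto
    have "(\<Sum>t<d*k. cnj (P $$ (j*k + ?r, t)) * ?Z i j * P $$ (i*k + ?c, t)) =
        ?Z i j * (\<Sum>t<d*k. P $$ (i*k + ?c, t) * cnj (P $$ (j*k + ?r, t)))"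
      by (simp add: sum_distrib_left ac_simps)
    also have "\<dots> = ?Z i j * P $$ (i*k + ?c, j*k + ?r)"
      using proj_index_eq_sum[OF Pc Ph Pi i j] by simp
    finally show "(\<Sum>t<d*k. cnj (P $$ (j*k + ?r, t)) * ?Z i j * P $$ (i*k + ?c, t)) = ?Z i j * P $$ (i*k + ?c, j*k + ?r)" .
  qed
  also have "\<dots> = amplify d k n (choi_map d k P) Z $$ (r,c)"
    using amplify_choi_map_index[OF r c] by simp
  finally show ?thesis by simp
qed

lemma choi_map_amplify_positive: assumes Pc: "P \<in> carrier_mat (d*k) (d*k)" and Ph: "adj P = P" and Pi: "P * P = P"
  and Z: "Z \<in> carrier_mat (n*d) (n*d)" and pZ: "positive (n*d) Z"
  shows "positive (n*k) (amplify d k n (choi_map d k P) Z)"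
  unfolding positive_def
proof (intro conjI ballI)
  let ?A = "amplify d k n (choi_map d k P) Z"
  let ?M = "\<lambda>t. adj (kraus_op n d k P t) * Z * kraus_op n d k P t"
  show Ac: "?A \<in> carrier_mat (n*k) (n*k)" by (simp add: amplify_def)
  fix w :: "complex vec" assume w: "w \<in> carrier_vec (n*k)"
  have Mc: "\<And>t. ?M t \<in> carrier_mat (n*k) (n*k)"
    using Z by (meson kraus_op_carrier adj_carrier mult_carrier_mat)
  have val: "conjugate w \<bullet> (?M t *\<^sub>v w) = conjugate (kraus_op n d k P t *\<^sub>v w) \<bullet> (Z *\<^sub>v (kraus_op n d k P t *\<^sub>v w))" for t
  proof -
    have B: "kraus_op n d k P t \<in> carrier_mat (n*d) (n*k)" by simp
    have aB: "adj (kraus_op n d k P t) \<in> carrier_mat (n*k) (n*d)" by simp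
    have aBZ: "adj (kraus_op n d k P t) * Z \<in> carrier_mat (n*k) (n*d)" using mult_carrier_mat[OF aB Z] .
    have Bw: "kraus_op n d k P t *\<^sub>v w \<in> carrier_vec (n*d)" using mult_mat_vec_carrier[OF B w] .
    have "?M t *\<^sub>v w = (adj (kraus_op n d k P t) * Z) *\<^sub>v (kraus_op n d k P t *\<^sub>v w)"
      by (rule assoc_mult_mat_vec[OF aBZ B w])
    also have "\<dots> = adj (kraus_op n d k P t) *\<^sub>v (Z *\<^sub>v (kraus_op n d k P t *\<^sub>v w))"
      by (rule assoc_mult_mat_vec[OF aB Z Bw])
    finally have "?M t *\<^sub>v w = adj (kraus_op n d k P t) *\<^sub>v (Z *\<^sub>v (kraus_op n d k P t *\<^sub>v w))" .
    then show ?thesis using sprod_adj_mult_vec[OF B mult_mat_vec_carrier[OF Z Bw] w] by simp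
  qed
  have pos_t: "Im (conjugate w \<bullet> (?M t *\<^sub>v w)) = 0 \<and> 0 \<le> Re (conjugate w \<bullet> (?M t *\<^sub>v w))" for t
  proof -
    have "kraus_op n d k P t *\<^sub>v w \<in> carrier_vec (n*d)" using mult_mat_vec_carrier[OF kraus_op_carrier w] .
    then show ?thesis unfolding val using pZ unfolding positive_def Let_def by blast
  qed
  have "conjugate w \<bullet> (?A *\<^sub>v w) = qform (n*k) ?A w" by (rule qform_eq[OF Ac w])
  also have "\<dots> = (\<Sum>t<d*k. qform (n*k) (?M t) w)"
    by (rule qform_sum) (use amplify_choi_map_eq_sum[OF Pc Ph Pi Z] in auto)
  also have "\<dots> = (\<Sum>t<d*k. conjugate w \<bullet> (?M t *\<^sub>v w))"
    by (rule sum.cong[OF refl]) (rule qform_eq[OF Mc w, symmetric])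
  finally have e: "conjugate w \<bullet> (?A *\<^sub>v w) = (\<Sum>t<d*k. conjugate w \<bullet> (?M t *\<^sub>v w))" .
  show "let z = conjugate w \<bullet> (?A *\<^sub>v w) in Im z = 0 \<and> 0 \<le> Re z"
    unfolding Let_def e Im_sum Re_sum using pos_t by (auto intro: sum_nonneg)
qed

lemma choi_map_add: assumes X: "X \<in> carrier_mat d d" and Y: "Y \<in> carrier_mat d d"
  shows "choi_map d k P (X + Y) = choi_map d k P X + choi_map d k P Y"
proof (rule eq_matI)
  fix p q assume "p < dim_row (choi_map d k P X + choi_map d k P Y)" "q < dim_col (choi_map d k P X + choi_map d k P Y)"
  then have p: "p < k" and q: "q < k" by auto
  have "choi_map d k P (X + Y) $$ (p,q) = (\<Sum>i<d. \<Sum>j<d. (X $$ (j,i) + Y $$ (j,i)) * P $$ (i*k+q, j*k+p))"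
    unfolding choi_map_def using p q X Y by (intro trans[OF index_mat(1)] sum.cong refl) auto
  also have "\<dots> = (\<Sum>i<d. \<Sum>j<d. X $$ (j,i) * P $$ (i*k+q, j*k+p)) + (\<Sum>i<d. \<Sum>j<d. Y $$ (j,i) * P $$ (i*k+q, j*k+p))"
    by (simp add: distrib_right sum.distrib)
  also have "\<dots> = (choi_map d k P X + choi_map d k P Y) $$ (p,q)" using p q by (simp add: choi_map_def)
  finally show "choi_map d k P (X + Y) $$ (p,q) = (choi_map d k P X + choi_map d k P Y) $$ (p,q)" .
qed auto

lemma choi_map_smult: assumes X: "X \<in> carrier_mat d d"
  shows "choi_map d k P (a \<cdot>\<^sub>m X) = a \<cdot>\<^sub>m choi_map d k P X"
proof (rule eq_matI)
  fix p q assume "p < dim_row (a \<cdot>\<^sub>m choi_map d k P X)" "q < dim_col (a \<cdot>\<^sub>m choi_map d k P X)"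
  then have p: "p < k" and q: "q < k" by auto
  have "choi_map d k P (a \<cdot>\<^sub>m X) $$ (p,q) = (\<Sum>i<d. \<Sum>j<d. (a * X $$ (j,i)) * P $$ (i*k+q, j*k+p))"
    unfolding choi_map_def using p q X by (intro trans[OF index_mat(1)] sum.cong refl) auto
  also have "\<dots> = a * (\<Sum>i<d. \<Sum>j<d. X $$ (j,i) * P $$ (i*k+q, j*k+p))"
    by (simp add: sum_distrib_left mult.assoc)
  also have "\<dots> = (a \<cdot>\<^sub>m choi_map d k P X) $$ (p,q)" using p q by (simp add: choi_map_def)
  finally show "choi_map d k P (a \<cdot>\<^sub>m X) $$ (p,q) = (a \<cdot>\<^sub>m choi_map d k P X) $$ (p,q)" .
qed auto

lemma choi_map_blockalg: assumes Pbd: "right_blockdiag ms (tdim ns) (tdim ns) P"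
  shows "choi_map (tdim ns) (tdim ms) P X \<in> blockalg ms"
  unfolding blockalg_def
proof (intro CollectI conjI allI impI)
  let ?d = "tdim ns" and ?k = "tdim ms"
  show "choi_map ?d ?k P X \<in> carrier_mat ?k ?k" by simp
  fix p q assume p: "p < ?k" and q: "q < ?k" and b: "blk ms p \<noteq> blk ms q"
  have "choi_map ?d ?k P X $$ (p,q) = (\<Sum>i<?d. \<Sum>j<?d. X $$ (j,i) * P $$ (i*?k+q, j*?k+p))"
    using p q by (simp add: choi_map_def)
  also have "\<dots> = 0"
  proof (intro sum.neutral ballI)
    fix i j assume "i \<in> {..<?d}" "j \<in> {..<?d}"
    then have i: "i*?k+q < ?d*?k" and j: "j*?k+p < ?d*?k" using index_comb_less p q by auto
    have "(i*?k+q) mod ?k = q" "(j*?k+p) mod ?k = p" using p q by auto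
    then have "P $$ (i*?k+q, j*?k+p) = 0" using Pbd i j b unfolding right_blockdiag_def by auto
    then show "X $$ (j,i) * P $$ (i*?k+q, j*?k+p) = 0" by simp
  qed
  finally show "choi_map ?d ?k P X $$ (p,q) = 0" .
qed

lemma cp_map_choi_map:
  assumes Pbd: "right_blockdiag ms (tdim ns) (tdim ns) P" and Ph: "adj P = P" and Pi: "P * P = P"
  shows "cp_map ns ms (choi_map (tdim ns) (tdim ms) P)"
  unfolding cp_map_def Let_def
proof (intro conjI ballI allI impI)
  let ?d = "tdim ns" and ?k = "tdim ms"
  fix X assume "X \<in> blockalg ns"
  show "choi_map ?d ?k P X \<in> blockalg ms" by (rule choi_map_blockalg[OF Pbd])
next
  fix X Y assume "X \<in> blockalg ns" "Y \<in> blockalg ns"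
  then show "choi_map (tdim ns) (tdim ms) P (X + Y) = choi_map (tdim ns) (tdim ms) P X + choi_map (tdim ns) (tdim ms) P Y"
    by (intro choi_map_add) (auto simp: blockalg_def)
next
  fix X and a :: complex assume "X \<in> blockalg ns"
  then show "choi_map (tdim ns) (tdim ms) P (a \<cdot>\<^sub>m X) = a \<cdot>\<^sub>m choi_map (tdim ns) (tdim ms) P X"
    by (intro choi_map_smult) (auto simp: blockalg_def)
next
  fix n Z
  assume "Z \<in> carrier_mat (n * tdim ns) (n * tdim ns) \<and>
    (\<forall>s<n. \<forall>t<n. subblock (tdim ns) Z s t \<in> blockalg ns) \<and> positive (n * tdim ns) Z"
  then show "positive (n * tdim ms) (amplify (tdim ns) (tdim ms) n (choi_map (tdim ns) (tdim ms) P) Z)"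
    using choi_map_amplify_positive[OF right_blockdiag_carrier[OF Pbd] Ph Pi] by blast
qed

theorem theorem5p7:
  fixes ns ms :: "nat list" and V :: "complex mat set"
  assumes "qmr ns ms V"
    and "symmetric_qmr V"
    and "decomposable ns ms V"
  shows "\<exists>Phi. cp_map ns ms Phi \<and> tildeS ns ms Phi = V"
proof -
  obtain P where Pbd: "right_blockdiag ms (tdim ns) (tdim ns) P" and Ph: "adj P = P" and Pi: "P * P = P"
    and V: "V = corner ms (tdim ns) P"
    using qmr_eq_corner[OF assms] by blast
  have "CPhi ns ms (choi_map (tdim ns) (tdim ms) P) = P"
    by (rule CPhi_choi_map[OF right_blockdiag_carrier[OF Pbd] corner_proj_offblock_zero[OF assms(1) V Pbd Pi]])
  then have "tildeS ns ms (choi_map (tdim ns) (tdim ms) P) = V"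
    unfolding V by (rule tildeS_eq_corner[OF Pbd Ph Pi])
  then show ?thesis using cp_map_choi_map[OF Pbd Ph Pi] by blast
qed

end
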